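(* Let $k\ge 1$, $a\ge 1$ be integers and $N=2^a$. Then: (i) Every $X\in GL(Nk,\mathbb F_2)$ can be written as $X=PM$, where $P$ is an $Nk\times Nk$ permutation matrix and $M$ is a product of in-block factors and at most $4(N-1)$ transversal layers. (ii) If $X\in GL(Nk,\mathbb F_2)$ is block upper triangular or block lower triangular with respect to the partition of $[Nk]$ into $N$ consecutive blocks of size $k$ (i.e. its $k\times k$ block $X_{ij}$ vanishes for all $i>j$, respectively for all $i<j$), then $X$ itself (with no permutation factor) is a product of in-block factors and at most $2(N-1)$ transversal layers.
   Context: Setting: $N$ codeblocks of a CSS code each encoding $k$ logical qubits. Logical qubit $j\in[k]$ of codeblock $i\in[N]$ is given index $(i-1)k+j$. A logical circuit of CNOT gates on the $Nk$ logical qubits is described by its action on $X$-type logical operators, an invertible matrix in $GL(Nk,\mathbb F_2)$; composition of circuits corresponds to matrix multiplication. An in-block factor is a block-diagonal matrix $\mathrm{diag}(C_1,\dots,C_N)$ with each $C_i\in GL(k,\mathbb F_2)$ (for phantom codes these are realized by relabelling qubits, at zero physical cost). Let $E^{(N)}_{ij}\in\mathbb F_2^{N\times N}$ denote the matrix unit with a single $1$ in position $(i,j)$. A transversal layer is a matrix $I_{Nk}+\sum_{t=1}^{s}E^{(N)}_{i_tj_t}\otimes I_k$, where $(i_1,j_1),\dots,(i_s,j_s)$ are ordered pairs of codeblock indices and the $2s$ indices $i_1,j_1,\dots,i_s,j_s$ are pairwise distinct (a physical depth-one layer of transversal CNOTs between disjoint pairs of codeblocks). *)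

theory Defs
  imports "HOL-Library.Z2" "Jordan_Normal_Form.Matrix" "HOL-Combinatorics.Permutations"
begin

(* Indices are 0-based: codeblock i (0 <= i < N) owns the logical indices
   i*k, ..., i*k+k-1, i.e. index r lies in codeblock r div k. *)

definition GL2 :: "nat \<Rightarrow> bit mat set" where
  "GL2 n = {X. X \<in> carrier_mat n n \<and> invertible_mat X}"

definition perm_matrix :: "nat \<Rightarrow> bit mat \<Rightarrow> bool" where
  "perm_matrix n P \<longleftrightarrow> (\<exists>\<sigma>. \<sigma> permutes {..<n} \<and>
      P = mat n n (\<lambda>(r, c). if \<sigma> r = c then 1 else 0))"

definition diag_block :: "nat \<Rightarrow> nat \<Rightarrow> bit mat \<Rightarrow> bit mat" where
  "diag_block k i D = mat k k (\<lambda>(r, c). D $$ (i * k + r, i * k + c))"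

definition in_block_factor :: "nat \<Rightarrow> nat \<Rightarrow> bit mat \<Rightarrow> bool" where
  "in_block_factor N k D \<longleftrightarrow> D \<in> carrier_mat (N * k) (N * k) \<and>
     (\<forall>r < N * k. \<forall>c < N * k. r div k \<noteq> c div k \<longrightarrow> D $$ (r, c) = 0) \<and>
     (\<forall>i < N. invertible_mat (diag_block k i D))"

definition disjoint_pairs :: "nat \<Rightarrow> (nat \<times> nat) set \<Rightarrow> bool" where
  "disjoint_pairs N S \<longleftrightarrow> S \<subseteq> {..<N} \<times> {..<N} \<and>
     (\<forall>(i, j) \<in> S. i \<noteq> j) \<and>
     (\<forall>(i, j) \<in> S. \<forall>(i', j') \<in> S. (i, j) \<noteq> (i', j') \<longrightarrow>
        i \<noteq> i' \<and> i \<noteq> j' \<and> j \<noteq> i' \<and> j \<noteq> j')"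

(* I_{Nk} + sum_{(i,j) in S} E^{(N)}_{ij} \<otimes> I_k, written out entrywise *)
definition layer_matrix :: "nat \<Rightarrow> nat \<Rightarrow> (nat \<times> nat) set \<Rightarrow> bit mat" where
  "layer_matrix N k S = mat (N * k) (N * k) (\<lambda>(r, c).
      (if r = c then 1 else 0) +
      (if (r div k, c div k) \<in> S \<and> r mod k = c mod k then 1 else 0))"

definition transversal_layer :: "nat \<Rightarrow> nat \<Rightarrow> bit mat \<Rightarrow> bool" where
  "transversal_layer N k L \<longleftrightarrow> (\<exists>S. disjoint_pairs N S \<and> L = layer_matrix N k S)"

definition layered_product :: "nat \<Rightarrow> nat \<Rightarrow> nat \<Rightarrow> bit mat \<Rightarrow> bool" where
  "layered_product N k m M \<longleftrightarrow> (\<exists>fs :: (bool \<times> bit mat) list.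
      M = foldr (\<lambda>f A. snd f * A) fs (1\<^sub>m (N * k)) \<and>
      (\<forall>f \<in> set fs. if fst f then transversal_layer N k (snd f)
                                 else in_block_factor N k (snd f)) \<and>
      length (filter fst fs) \<le> m)"

definition block_upper_triangular :: "nat \<Rightarrow> nat \<Rightarrow> bit mat \<Rightarrow> bool" where
  "block_upper_triangular N k X \<longleftrightarrow>
     (\<forall>r < N * k. \<forall>c < N * k. r div k > c div k \<longrightarrow> X $$ (r, c) = 0)"

definition block_lower_triangular :: "nat \<Rightarrow> nat \<Rightarrow> bit mat \<Rightarrow> bool" where
  "block_lower_triangular N k X \<longleftrightarrow>
     (\<forall>r < N * k. \<forall>c < N * k. r div k < c div k \<longrightarrow> X $$ (r, c) = 0)"

end

theory Submission
  imports Defs "Jordan_Normal_Form.Determinant" "HOL-Number_Theory.Cong"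
begin

text \<open>
  Write \<open>N = 2 h\<close> and split the codeblocks into two halves. A block lower triangular
  \<open>X = [[A, 0], [C, D]]\<close> factors as \<open>diag(A, D) \<cdot> [[1, 0], [D\<inverse> C, 1]]\<close>. The halves \<open>A\<close> and
  \<open>D\<close> are treated recursively, and since their layers act on disjoint codeblocks they run in
  parallel, so \<open>diag(A, D)\<close> costs \<open>2 (h - 1)\<close> layers. The transvection \<open>[[1, 0], [M, 1]]\<close>
  splits along the \<open>h\<close> cyclic block diagonals \<open>{(i, i + t mod h)}\<close> of \<open>M\<close>. A block diagonal
  whose blocks are invertible or zero is one layer conjugated by in-block factors, and over
  \<open>\<bbbF>\<^sub>2\<close> every square matrix is an invertible matrix plus an invertible-or-zero one; so the
  transvection costs \<open>2 h\<close> layers, \<open>2 (N - 1)\<close> in total. Block upper triangular matrices follow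
  by transposition, and part (i) from a pivoted triangular decomposition \<open>P X = U L\<close>.
\<close>

section \<open>Permutation matrices and triangular factorisations over a field\<close>

lemma invertible_mat_inverse:
  assumes "invertible_mat A" and "A \<in> carrier_mat n n"
  shows "\<exists>B \<in> carrier_mat n n. A * B = 1\<^sub>m n \<and> B * A = 1\<^sub>m n"
proof -
  obtain B where AB: "A * B = 1\<^sub>m n" and BA: "B * A = 1\<^sub>m (dim_row B)"
    using assms unfolding invertible_mat_def inverts_mat_def by auto
  from AB BA assms(2) have "B \<in> carrier_mat n n"
    by (metis carrier_matD carrier_matI index_mult_mat(2,3) index_one_mat(2,3))
  with AB BA show ?thesis by auto
qed

lemma invertible_mat_iff_det:
  fixes A :: "'a::field mat"
  assumes A: "A \<in> carrier_mat n n"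
  shows "invertible_mat A \<longleftrightarrow> det A \<noteq> 0"
proof
  assume "invertible_mat A"
  then obtain B where "B \<in> carrier_mat n n" "A * B = 1\<^sub>m n"
    using invertible_mat_inverse A by blast
  then have "det A * det B = 1" using det_mult[OF A] by (metis det_one)
  then show "det A \<noteq> 0" by auto
next
  assume "det A \<noteq> 0"
  from det_non_zero_imp_unit[OF A this, of "()"]
  obtain B where "B \<in> carrier_mat n n" "B * A = 1\<^sub>m n" "A * B = 1\<^sub>m n"
    unfolding Units_def ring_mat_def by auto
  then show "invertible_mat A"
    using A unfolding invertible_mat_def inverts_mat_def by auto
qed

lemma invertible_mat_mult:
  fixes A :: "'a::field mat"
  assumes "A \<in> carrier_mat n n" "B \<in> carrier_mat n n" "invertible_mat A" "invertible_mat B"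
  shows "invertible_mat (A * B)"
  using assms by (simp add: invertible_mat_iff_det[of _ n] det_mult)

lemma diff_add_cancel_mat:
  "A \<in> carrier_mat nr nc \<Longrightarrow> B \<in> carrier_mat nr nc \<Longrightarrow> A - B + B = (A :: 'a::ab_group_add mat)"
  by (rule eq_matI) auto

lemma permutes_lessThan: "\<sigma> permutes {..<n} \<Longrightarrow> i < n \<Longrightarrow> \<sigma> i < n"
  using permutes_in_image[of \<sigma> "{..<n}" i] by simp

lemma det_zero_col:
  fixes A :: "'a::comm_ring_1 mat"
  assumes "A \<in> carrier_mat n n" "j < n" "\<And>i. i < n \<Longrightarrow> A $$ (i, j) = 0"
  shows "det A = 0"
proof -
  have "(\<Prod>j<n. A $$ (p j, j)) = 0" if "p permutes {0..<n}" for p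
    using assms that by (intro prod_zero bexI[of _ j]) (auto simp: permutes_lessThan)
  then show ?thesis by (simp add: det_col[OF assms(1)])
qed

definition perm_mat :: "nat \<Rightarrow> (nat \<Rightarrow> nat) \<Rightarrow> 'a::{zero,one} mat" where
  "perm_mat n \<sigma> = mat n n (\<lambda>(r, c). if \<sigma> r = c then 1 else 0)"

lemma perm_mat_carrier [simp]: "perm_mat n \<sigma> \<in> carrier_mat n n"
  and dim_perm_mat [simp]: "dim_row (perm_mat n \<sigma>) = n" "dim_col (perm_mat n \<sigma>) = n"
  by (simp_all add: perm_mat_def)

lemma perm_mat_mult_index:
  fixes X :: "'a::semiring_1 mat"
  assumes "\<sigma> permutes {..<n}" "X \<in> carrier_mat n m" "i < n" "j < m"
  shows "(perm_mat n \<sigma> * X) $$ (i, j) = X $$ (\<sigma> i, j)"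
proof -
  have "\<sigma> i < n" using assms(1,3) by (rule permutes_lessThan)
  then show ?thesis
    using assms(2-4) by (simp add: perm_mat_def scalar_prod_def if_distrib[of "\<lambda>x. x * _"] sum.delta
        cong: if_cong)
qed

lemma mult_perm_mat_index:
  fixes X :: "'a::semiring_1 mat"
  assumes "\<sigma> permutes {..<n}" "X \<in> carrier_mat m n" "i < m" "j < n"
  shows "(X * perm_mat n \<sigma>) $$ (i, \<sigma> j) = X $$ (i, j)"
proof -
  have "\<sigma> j < n" using assms(1,4) by (rule permutes_lessThan)
  moreover have "\<sigma> s = \<sigma> j \<longleftrightarrow> s = j" for s using assms(1) by (metis permutes_inj injD)
  ultimately show ?thesis
    using assms(2-4) by (simp add: perm_mat_def scalar_prod_def if_distrib[of "\<lambda>x. _ * x"] sum.delta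
        cong: if_cong)
qed

lemma perm_mat_mult:
  assumes "\<sigma> permutes {..<n}" "\<rho> permutes {..<n}"
  shows "perm_mat n \<sigma> * perm_mat n \<rho> = (perm_mat n (\<rho> \<circ> \<sigma>) :: 'a::semiring_1 mat)"
proof (rule eq_matI)
  fix i j
  assume "i < dim_row (perm_mat n (\<rho> \<circ> \<sigma>) :: 'a mat)" "j < dim_col (perm_mat n (\<rho> \<circ> \<sigma>) :: 'a mat)"
  then show "(perm_mat n \<sigma> * perm_mat n \<rho>) $$ (i, j) = (perm_mat n (\<rho> \<circ> \<sigma>) :: 'a mat) $$ (i, j)"
    using assms by (subst perm_mat_mult_index[OF assms(1) perm_mat_carrier])
      (auto simp: perm_mat_def permutes_lessThan)
qed auto

lemma perm_mat_id: "perm_mat n id = 1\<^sub>m n"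
  by (rule eq_matI) (auto simp: perm_mat_def)

lemma det_perm_mat_nonzero:
  assumes "\<sigma> permutes {..<n}"
  shows "det (perm_mat n \<sigma> :: 'a::field mat) \<noteq> 0"
proof -
  have "perm_mat n \<sigma> * perm_mat n (Hilbert_Choice.inv \<sigma>) = (1\<^sub>m n :: 'a mat)"
    using perm_mat_mult[OF assms permutes_inv[OF assms]] permutes_inv_o(2)[OF assms]
    by (simp add: perm_mat_id)
  then have "det (perm_mat n \<sigma> :: 'a mat) * det (perm_mat n (Hilbert_Choice.inv \<sigma>) :: 'a mat) = 1"
    by (metis det_mult det_one perm_mat_carrier)
  then show ?thesis by auto
qed

lemma perm_mat_swap_involution:
  assumes "p < n" "q < n"
  shows "perm_mat n (Transposition.transpose p q) * perm_mat n (Transposition.transpose p q) =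
    (1\<^sub>m n :: 'a::semiring_1 mat)"
proof -
  have "Transposition.transpose p q permutes {..<n}" using assms by (intro permutes_swap_id) auto
  then show ?thesis by (simp add: perm_mat_mult perm_mat_id)
qed

lemma perm_mat_inv_mult:
  fixes X :: "'a::semiring_1 mat"
  assumes "\<sigma> permutes {..<n}" "X \<in> carrier_mat n m"
  shows "perm_mat n (Hilbert_Choice.inv \<sigma>) * (perm_mat n \<sigma> * X) = X"
  using assms
  by (simp add: assoc_mult_mat[OF perm_mat_carrier perm_mat_carrier, symmetric]
      perm_mat_mult[OF permutes_inv] permutes_inv_o(1) perm_mat_id)

lemma perm_mat_Suc:
  assumes "\<sigma> permutes {..<n}"
  shows "perm_mat (Suc n) \<sigma> = four_block_mat (perm_mat n \<sigma>) (0\<^sub>m n 1) (0\<^sub>m 1 n) (1\<^sub>m 1)"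
proof (rule eq_matI)
  fix i j assume "i < dim_row (four_block_mat (perm_mat n \<sigma>) (0\<^sub>m n 1) (0\<^sub>m 1 n) (1\<^sub>m 1) :: 'a mat)"
    "j < dim_col (four_block_mat (perm_mat n \<sigma>) (0\<^sub>m n 1) (0\<^sub>m 1 n) (1\<^sub>m 1) :: 'a mat)"
  then have ij: "i < Suc n" "j < Suc n" by auto
  have "\<sigma> i = i" if "\<not> i < n" using permutes_not_in[OF assms, of i] that by simp
  then show "perm_mat (Suc n) \<sigma> $$ (i, j) =
      (four_block_mat (perm_mat n \<sigma>) (0\<^sub>m n 1) (0\<^sub>m 1 n) (1\<^sub>m 1) :: 'a mat) $$ (i, j)"
    using ij permutes_lessThan[OF assms, of i]
    by (cases "i < n"; cases "j < n") (auto simp: perm_mat_def)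
qed auto

lemma four_block_mat_schur:
  fixes Y :: "'a::comm_ring_1 mat"
  assumes Y: "Y \<in> carrier_mat n n" and u: "u \<in> carrier_mat n m" and v: "v \<in> carrier_mat m n"
    and x: "x \<in> carrier_mat m m" and x': "x' \<in> carrier_mat m m" "x' * x = 1\<^sub>m m"
  shows "four_block_mat Y u v x =
    four_block_mat (1\<^sub>m n) (u * x') (0\<^sub>m m n) (1\<^sub>m m) * four_block_mat (Y - u * x' * v) (0\<^sub>m n m) v x"
proof -
  have w: "u * x' * v \<in> carrier_mat n n" using u x' v by simp
  have "Y - u * x' * v + u * x' * v = Y" using Y w by (rule diff_add_cancel_mat)
  moreover have "u * x' * x = u"
    using u x' x by (simp add: assoc_mult_mat[OF u x'(1) x])
  ultimately show ?thesis
    using Y u v x x' w mult_four_block_mat[OF one_carrier_mat mult_carrier_mat[OF u x'(1)]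
        zero_carrier_mat one_carrier_mat minus_carrier_mat[OF w] zero_carrier_mat v x]
    by simp
qed

lemma four_block_mat_lower_factor:
  fixes Y :: "'a::semiring_1 mat"
  assumes Y: "Y \<in> carrier_mat n n" and v: "v \<in> carrier_mat m n" and x: "x \<in> carrier_mat m m"
    and x': "x' \<in> carrier_mat m m" "x * x' = 1\<^sub>m m"
  shows "four_block_mat Y (0\<^sub>m n m) v x =
    four_block_mat Y (0\<^sub>m n m) (0\<^sub>m m n) x * four_block_mat (1\<^sub>m n) (0\<^sub>m n m) (x' * v) (1\<^sub>m m)"
proof -
  have "x * (x' * v) = v" using x x' v by (simp add: assoc_mult_mat[OF x x'(1) v, symmetric])
  then show ?thesis
    using Y v x x' mult_four_block_mat[OF Y zero_carrier_mat zero_carrier_mat x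
        one_carrier_mat zero_carrier_mat mult_carrier_mat[OF x'(1) v] one_carrier_mat]
    by simp
qed

lemma corner_elimination:
  fixes B :: "'a::field mat"
  assumes B: "B \<in> carrier_mat (Suc n) (Suc n)" and pivot: "B $$ (n, n) \<noteq> 0"
  obtains Y u v x x' where "Y \<in> carrier_mat n n" "u \<in> carrier_mat n 1" "v \<in> carrier_mat 1 n"
    "x \<in> carrier_mat 1 1" "x' \<in> carrier_mat 1 1" "x * x' = 1\<^sub>m 1" "det x \<noteq> 0"
    "B = four_block_mat (1\<^sub>m n) u (0\<^sub>m 1 n) (1\<^sub>m 1) * four_block_mat Y (0\<^sub>m n 1) v x"
    "det B = det Y * det x"
proof -
  obtain Y u v x where split: "split_block B n n = (Y, u, v, x)" by (metis prod_cases4)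
  have blocks: "Y \<in> carrier_mat n n" "u \<in> carrier_mat n 1" "v \<in> carrier_mat 1 n" "x \<in> carrier_mat 1 1"
    "B = four_block_mat Y u v x"
    using split_block[OF split, of 1 1] B by auto
  have "x $$ (0, 0) = B $$ (n, n)" using split B by (auto simp: split_block_def)
  define x' where "x' = mat 1 1 (\<lambda>_. inverse (x $$ (0, 0)))"
  have x': "x' \<in> carrier_mat 1 1" "x * x' = 1\<^sub>m 1" "x' * x = 1\<^sub>m 1"
    using blocks(4) pivot \<open>x $$ (0, 0) = B $$ (n, n)\<close>
    by (auto intro!: eq_matI simp: x'_def scalar_prod_def)
  define Y' where "Y' = Y - u * x' * v"
  have Y': "Y' \<in> carrier_mat n n"
    unfolding Y'_def
    using minus_carrier_mat[OF mult_carrier_mat[OF mult_carrier_mat[OF blocks(2) x'(1)] blocks(3)]] .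
  have B_eq: "B = four_block_mat (1\<^sub>m n) (u * x') (0\<^sub>m 1 n) (1\<^sub>m 1) * four_block_mat Y' (0\<^sub>m n 1) v x"
    using four_block_mat_schur[OF blocks(1-4) x'(1,3)] blocks(5) by (simp add: Y'_def)
  have "det B = det Y' * det x"
    unfolding B_eq
    using det_mult[OF four_block_carrier_mat[OF one_carrier_mat one_carrier_mat]
        four_block_carrier_mat[OF Y' blocks(4)], of "u * x'" "0\<^sub>m 1 n" "0\<^sub>m n 1" v]
      det_four_block_mat_lower_left_zero[OF one_carrier_mat mult_carrier_mat[OF blocks(2) x'(1)]
          refl one_carrier_mat]
      det_four_block_mat_upper_right_zero[OF Y' refl blocks(3,4)]
    by simp
  moreover have "det x \<noteq> 0" using det_mult[OF blocks(4) x'(1)] x'(2) by auto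
  ultimately show thesis
    using that[OF Y' mult_carrier_mat[OF blocks(2) x'(1)] blocks(3,4) x'(1,2)] B_eq by blast
qed

lemma corner_block_diagonalization:
  fixes B :: "'a::field mat"
  assumes B: "B \<in> carrier_mat (Suc n) (Suc n)" and pivot: "B $$ (n, n) \<noteq> 0"
  obtains T T' Y x where "T \<in> carrier_mat (Suc n) (Suc n)" "T' \<in> carrier_mat (Suc n) (Suc n)"
    "det T \<noteq> 0" "det T' \<noteq> 0" "Y \<in> carrier_mat n n" "x \<in> carrier_mat 1 1" "det x \<noteq> 0"
    "B = T * four_block_mat Y (0\<^sub>m n 1) (0\<^sub>m 1 n) x * T'"
proof -
  obtain Y u v x x' where Yuvx: "Y \<in> carrier_mat n n" "u \<in> carrier_mat n 1" "v \<in> carrier_mat 1 n"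
    "x \<in> carrier_mat 1 1" "x' \<in> carrier_mat 1 1" "x * x' = 1\<^sub>m 1" "det x \<noteq> 0"
    and B_eq: "B = four_block_mat (1\<^sub>m n) u (0\<^sub>m 1 n) (1\<^sub>m 1) * four_block_mat Y (0\<^sub>m n 1) v x"
    and "det B = det Y * det x"
    by (rule corner_elimination[OF B pivot])
  define T where "T = four_block_mat (1\<^sub>m n) u (0\<^sub>m 1 n) (1\<^sub>m 1)"
  define T' where "T' = four_block_mat (1\<^sub>m n) (0\<^sub>m n 1) (x' * v) (1\<^sub>m 1)"
  have T: "T \<in> carrier_mat (Suc n) (Suc n)" "T' \<in> carrier_mat (Suc n) (Suc n)" "det T = 1" "det T' = 1"
    unfolding T_def T'_def using Yuvx
      det_four_block_mat_lower_left_zero[OF one_carrier_mat Yuvx(2) refl one_carrier_mat]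
      det_four_block_mat_upper_right_zero[OF one_carrier_mat refl mult_carrier_mat[OF Yuvx(5,3)]
          one_carrier_mat]
    by auto
  have "B = T * (four_block_mat Y (0\<^sub>m n 1) (0\<^sub>m 1 n) x * T')"
    unfolding B_eq T_def T'_def by (subst four_block_mat_lower_factor[OF Yuvx(1,3-6)]) (rule refl)
  moreover have "four_block_mat Y (0\<^sub>m n 1) (0\<^sub>m 1 n) x \<in> carrier_mat (Suc n) (Suc n)"
    using Yuvx by auto
  ultimately have "B = T * four_block_mat Y (0\<^sub>m n 1) (0\<^sub>m 1 n) x * T'"
    using T by (simp add: assoc_mult_mat)
  with T Yuvx(1,4,7) show thesis by (intro that) auto
qed

lemma pivot_to_corner:
  fixes B :: "'a::field mat"
  assumes B: "B \<in> carrier_mat (Suc n) (Suc n)" and pq: "p < Suc n" "q < Suc n" "B $$ (p, q) \<noteq> 0"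
  obtains P Q where "P \<in> carrier_mat (Suc n) (Suc n)" "Q \<in> carrier_mat (Suc n) (Suc n)"
    "det P \<noteq> 0" "det Q \<noteq> 0" "(P * B * Q) $$ (n, n) \<noteq> 0" "B = P * (P * B * Q) * Q"
proof -
  define P :: "'a mat" where "P = perm_mat (Suc n) (Transposition.transpose p n)"
  define Q :: "'a mat" where "Q = perm_mat (Suc n) (Transposition.transpose q n)"
  have swaps: "Transposition.transpose p n permutes {..<Suc n}"
    "Transposition.transpose q n permutes {..<Suc n}"
    using pq by (auto intro!: permutes_swap_id)
  have PQ: "P \<in> carrier_mat (Suc n) (Suc n)" "Q \<in> carrier_mat (Suc n) (Suc n)"
    "P * P = 1\<^sub>m (Suc n)" "Q * Q = 1\<^sub>m (Suc n)" "det P \<noteq> 0" "det Q \<noteq> 0"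
    using pq swaps by (auto simp: P_def Q_def perm_mat_swap_involution det_perm_mat_nonzero)
  have "(P * B * Q) $$ (n, Transposition.transpose q n q) = (P * B) $$ (n, q)"
    unfolding Q_def using B pq by (intro mult_perm_mat_index swaps) (auto simp: P_def)
  also have "\<dots> = B $$ (p, q)"
    unfolding P_def using B pq by (subst perm_mat_mult_index[OF swaps(1)]) auto
  finally have "(P * B * Q) $$ (n, n) \<noteq> 0" using pq by simp
  moreover have "P * (P * B * Q) * Q = (P * P) * B * (Q * Q)"
    using PQ(1,2) B
    by (simp add: assoc_mult_mat[of _ "Suc n" "Suc n" _ "Suc n" _ "Suc n"]
        mult_carrier_mat[of _ "Suc n" "Suc n"])
  ultimately show thesis using that PQ B by simp
qed

(* diag(0, ..., 0, 1, ..., 1) with r trailing ones, so that the corner recursion appends a 1. *)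
definition rank_diag :: "nat \<Rightarrow> nat \<Rightarrow> 'a::{zero,one} mat" where
  "rank_diag n r = mat n n (\<lambda>(i, j). if i = j \<and> n - r \<le> i then 1 else 0)"

lemma rank_diag_carrier [simp]: "rank_diag n r \<in> carrier_mat n n"
  and dim_rank_diag [simp]: "dim_row (rank_diag n r) = n" "dim_col (rank_diag n r) = n"
  by (simp_all add: rank_diag_def)

lemma rank_diag_Suc:
  "four_block_mat (rank_diag n r) (0\<^sub>m n 1) (0\<^sub>m 1 n) (1\<^sub>m 1) = rank_diag (Suc n) (Suc r)"
  by (rule eq_matI) (auto simp: rank_diag_def less_Suc_eq)

lemma rank_normal_form:
  fixes B :: "'a::field mat"
  assumes "B \<in> carrier_mat n n"
  shows "\<exists>U V r. U \<in> carrier_mat n n \<and> V \<in> carrier_mat n n \<and> det U \<noteq> 0 \<and> det V \<noteq> 0 \<and>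
    B = U * rank_diag n r * V"
  using assms
proof (induction n arbitrary: B)
  case 0
  then have "B = 1\<^sub>m 0 * rank_diag 0 0 * 1\<^sub>m 0" by (intro eq_matI) auto
  then show ?case by (intro exI[of _ "1\<^sub>m 0"]) auto
next
  case (Suc n)
  show ?case
  proof (cases "\<exists>p<Suc n. \<exists>q<Suc n. B $$ (p, q) \<noteq> 0")
    case False
    then have "B = 1\<^sub>m (Suc n) * rank_diag (Suc n) 0 * 1\<^sub>m (Suc n)"
      using Suc.prems by (intro eq_matI) (auto simp: rank_diag_def)
    then show ?thesis by (intro exI[of _ "1\<^sub>m (Suc n)"]) auto
  next
    case True
    then obtain p q where pq: "p < Suc n" "q < Suc n" "B $$ (p, q) \<noteq> 0" by blast
    obtain P Q where PQ: "P \<in> carrier_mat (Suc n) (Suc n)" "Q \<in> carrier_mat (Suc n) (Suc n)"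
      "det P \<noteq> 0" "det Q \<noteq> 0" "(P * B * Q) $$ (n, n) \<noteq> 0" "B = P * (P * B * Q) * Q"
      by (rule pivot_to_corner[OF Suc.prems pq])
    have "P * B * Q \<in> carrier_mat (Suc n) (Suc n)" using PQ Suc.prems by simp
    then obtain T T' Y x where TYx: "T \<in> carrier_mat (Suc n) (Suc n)" "T' \<in> carrier_mat (Suc n) (Suc n)"
      "det T \<noteq> 0" "det T' \<noteq> 0" "Y \<in> carrier_mat n n" "x \<in> carrier_mat 1 1" "det x \<noteq> 0"
      "P * B * Q = T * four_block_mat Y (0\<^sub>m n 1) (0\<^sub>m 1 n) x * T'"
      using PQ(5) by (rule corner_block_diagonalization)
    obtain U' V' r where U'V': "U' \<in> carrier_mat n n" "V' \<in> carrier_mat n n" "det U' \<noteq> 0" "det V' \<noteq> 0"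
      "Y = U' * rank_diag n r * V'"
      using Suc.IH[OF TYx(5)] by blast
    define D where "D = four_block_mat U' (0\<^sub>m n 1) (0\<^sub>m 1 n) x"
    define D' where "D' = four_block_mat V' (0\<^sub>m n 1) (0\<^sub>m 1 n) (1\<^sub>m 1)"
    have D: "D \<in> carrier_mat (Suc n) (Suc n)" "D' \<in> carrier_mat (Suc n) (Suc n)"
      "det D \<noteq> 0" "det D' \<noteq> 0"
      unfolding D_def D'_def using U'V' TYx(6,7)
        det_four_block_mat_upper_right_zero[OF U'V'(1) refl zero_carrier_mat TYx(6)]
        det_four_block_mat_upper_right_zero[OF U'V'(2) refl zero_carrier_mat one_carrier_mat]
      by auto
    have "four_block_mat Y (0\<^sub>m n 1) (0\<^sub>m 1 n) x = D * rank_diag (Suc n) (Suc r) * D'"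
      unfolding D_def D'_def rank_diag_Suc[symmetric] U'V'(5) using U'V' TYx(6)
      by (simp add: mult_four_block_mat[of _ n n _ 1 _ 1 _ _ n _ 1] mult_carrier_mat[of _ n n])
    then have "B = (P * T * D) * rank_diag (Suc n) (Suc r) * (D' * T' * Q)"
      using PQ TYx D
      by (simp add: assoc_mult_mat[of _ "Suc n" "Suc n" _ "Suc n" _ "Suc n"]
          mult_carrier_mat[of _ "Suc n" "Suc n"])
    moreover have "P * T * D \<in> carrier_mat (Suc n) (Suc n)" "D' * T' * Q \<in> carrier_mat (Suc n) (Suc n)"
      "det (P * T * D) \<noteq> 0" "det (D' * T' * Q) \<noteq> 0"
      using PQ TYx D by (auto simp: det_mult[of _ "Suc n"] mult_carrier_mat[of _ "Suc n" "Suc n"])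
    ultimately show ?thesis by blast
  qed
qed

lemma perm_mat_Suc_mult_corner:
  fixes Y :: "'a::comm_ring_1 mat"
  assumes \<sigma>: "\<sigma> permutes {..<n}" and Y: "Y \<in> carrier_mat n n" and u: "u \<in> carrier_mat n 1"
    and v: "v \<in> carrier_mat 1 n" and x: "x \<in> carrier_mat 1 1"
    and UL: "U \<in> carrier_mat n n" "L \<in> carrier_mat n n" "perm_mat n \<sigma> * Y = U * L"
  shows "perm_mat (Suc n) \<sigma> *
      (four_block_mat (1\<^sub>m n) u (0\<^sub>m 1 n) (1\<^sub>m 1) * four_block_mat Y (0\<^sub>m n 1) v x) =
    four_block_mat U (perm_mat n \<sigma> * u) (0\<^sub>m 1 n) (1\<^sub>m 1) * four_block_mat L (0\<^sub>m n 1) v x"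
proof -
  define P :: "'a mat" where "P = perm_mat n \<sigma>"
  have P: "P \<in> carrier_mat n n" by (simp add: P_def)
  have "four_block_mat (1\<^sub>m n) u (0\<^sub>m 1 n) (1\<^sub>m 1) * four_block_mat Y (0\<^sub>m n 1) v x =
      four_block_mat (Y + u * v) (u * x) v x"
    using Y u v x mult_four_block_mat[OF one_carrier_mat u zero_carrier_mat one_carrier_mat Y
        zero_carrier_mat v x]
    by simp
  moreover have "four_block_mat P (0\<^sub>m n 1) (0\<^sub>m 1 n) (1\<^sub>m 1) * four_block_mat (Y + u * v) (u * x) v x =
      four_block_mat (P * Y + P * u * v) (P * u * x) v x"
    using Y u v x P mult_four_block_mat[OF P zero_carrier_mat zero_carrier_mat one_carrier_mat
        add_carrier_mat[OF mult_carrier_mat[OF u v], of Y] mult_carrier_mat[OF u x] v x]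
    by (simp add: mult_add_distrib_mat[OF P Y] assoc_mult_mat[OF P u])
  moreover have "four_block_mat U (P * u) (0\<^sub>m 1 n) (1\<^sub>m 1) * four_block_mat L (0\<^sub>m n 1) v x =
      four_block_mat (P * Y + P * u * v) (P * u * x) v x"
    using UL u v x P mult_four_block_mat[OF UL(1) mult_carrier_mat[OF P u] zero_carrier_mat
        one_carrier_mat UL(2) zero_carrier_mat v x]
      left_add_zero_mat[OF mult_carrier_mat[OF mult_carrier_mat[OF P u] x]]
    by (simp add: P_def)
  ultimately show ?thesis unfolding perm_mat_Suc[OF \<sigma>] P_def by simp
qed

(* Pivoting in the last column lets the permutation of the recursive call, a permutation of
   {..<n}, serve unchanged for Suc n. *)
lemma perm_upper_lower_decomposition:
  fixes X :: "'a::field mat"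
  assumes "X \<in> carrier_mat n n" "det X \<noteq> 0"
  shows "\<exists>\<sigma> U L. \<sigma> permutes {..<n} \<and> U \<in> carrier_mat n n \<and> L \<in> carrier_mat n n \<and>
    upper_triangular U \<and> upper_triangular L\<^sup>T \<and> perm_mat n \<sigma> * X = U * L"
  using assms
proof (induction n arbitrary: X)
  case 0
  then have "perm_mat 0 id * X = 1\<^sub>m 0 * 1\<^sub>m 0" by (intro eq_matI) auto
  moreover have "upper_triangular (1\<^sub>m 0 :: 'a mat)" "upper_triangular (1\<^sub>m 0 :: 'a mat)\<^sup>T"
    by (simp_all add: upper_triangular_def)
  ultimately show ?case
    by (intro exI[of _ id] exI[of _ "1\<^sub>m 0"] conjI permutes_id one_carrier_mat) assumption+
next
  case (Suc n)
  obtain p where p: "p < Suc n" "X $$ (p, n) \<noteq> 0"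
    using det_zero_col[OF Suc.prems(1), of n] Suc.prems(2) by auto
  define \<tau> where "\<tau> = Transposition.transpose p n"
  have \<tau>: "\<tau> permutes {..<Suc n}" using p by (auto simp: \<tau>_def intro!: permutes_swap_id)
  define X' where "X' = perm_mat (Suc n) \<tau> * X"
  have "X' $$ (n, n) = X $$ (p, n)"
    unfolding X'_def using perm_mat_mult_index[OF \<tau> Suc.prems(1), of n n] by (simp add: \<tau>_def)
  moreover have "det X' = det (perm_mat (Suc n) \<tau> :: 'a mat) * det X"
    unfolding X'_def using Suc.prems(1) by (simp add: det_mult[of _ "Suc n"])
  ultimately have X': "X' \<in> carrier_mat (Suc n) (Suc n)" "X' $$ (n, n) \<noteq> 0" "det X' \<noteq> 0"
    using Suc.prems p det_perm_mat_nonzero[OF \<tau>] by (auto simp: X'_def)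
  obtain Y u v x x' where Yuvx: "Y \<in> carrier_mat n n" "u \<in> carrier_mat n 1" "v \<in> carrier_mat 1 n"
    "x \<in> carrier_mat 1 1" "x' \<in> carrier_mat 1 1" "x * x' = 1\<^sub>m 1" "det x \<noteq> 0"
    and X'_eq: "X' = four_block_mat (1\<^sub>m n) u (0\<^sub>m 1 n) (1\<^sub>m 1) * four_block_mat Y (0\<^sub>m n 1) v x"
    and "det X' = det Y * det x"
    by (rule corner_elimination[OF X'(1,2)])
  then obtain \<sigma> U' L' where IH: "\<sigma> permutes {..<n}" "U' \<in> carrier_mat n n" "L' \<in> carrier_mat n n"
    "upper_triangular U'" "upper_triangular L'\<^sup>T" "perm_mat n \<sigma> * Y = U' * L'"
    using Suc.IH[OF Yuvx(1)] X'(3) by auto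
  define U where "U = four_block_mat U' (perm_mat n \<sigma> * u) (0\<^sub>m 1 n) (1\<^sub>m 1)"
  define L where "L = four_block_mat L' (0\<^sub>m n 1) v x"
  have \<sigma>: "\<sigma> permutes {..<Suc n}" using IH(1) by (rule permutes_subset) auto
  have "perm_mat (Suc n) (\<tau> \<circ> \<sigma>) * X = perm_mat (Suc n) \<sigma> * X'"
    unfolding X'_def using Suc.prems(1)
    by (simp add: perm_mat_mult[OF \<sigma> \<tau>, symmetric] assoc_mult_mat[OF perm_mat_carrier perm_mat_carrier])
  also have "\<dots> = U * L"
    unfolding X'_eq U_def L_def using perm_mat_Suc_mult_corner[OF IH(1) Yuvx(1-4) IH(2,3,6)] .
  finally have "perm_mat (Suc n) (\<tau> \<circ> \<sigma>) * X = U * L" .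
  moreover have "upper_triangular U" "upper_triangular L\<^sup>T"
    unfolding U_def L_def using IH Yuvx
    by (auto simp: transpose_four_block_mat[of _ n n _ 1 _ 1] intro!: upper_triangular_four_block)
  moreover have "U \<in> carrier_mat (Suc n) (Suc n)" "L \<in> carrier_mat (Suc n) (Suc n)"
    unfolding U_def L_def using IH Yuvx by auto
  ultimately show ?case using permutes_compose[OF \<sigma> \<tau>] by blast
qed

section \<open>Matrices over \<open>\<bbbF>\<^sub>2\<close> as sums of invertible matrices\<close>

(* In the kernel equation, row i says v (i + 1 mod n) = d i * v i; as d 0 = 0 the zero
   propagates once around the cycle. *)
lemma det_diag_plus_cyclic_shift_nonzero:
  fixes d :: "nat \<Rightarrow> bit"
  assumes n: "n > 0" and d0: "d 0 = 0"
  shows "det (mat n n (\<lambda>(i, j). (if i = j then d i else 0) + (if j = Suc i mod n then 1 else 0))) \<noteq> 0"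
    (is "det ?A \<noteq> 0")
proof
  assume "det ?A = 0"
  then obtain w where w: "w \<in> carrier_vec n" "w \<noteq> 0\<^sub>v n" "?A *\<^sub>v w = 0\<^sub>v n"
    using det_0_iff_vec_prod_zero_field[of ?A n] by auto
  have step: "w $ (Suc i mod n) = d i * w $ i" if "i < n" for i
  proof -
    have "0 = (?A *\<^sub>v w) $ i" using w(3) that by simp
    also have "\<dots> = (\<Sum>j<n. ((if i = j then d i else 0) + (if j = Suc i mod n then 1 else 0)) * w $ j)"
      using that w(1) by (simp add: scalar_prod_def lessThan_atLeast0)
    also have "\<dots> = (\<Sum>j<n. if j = i then d i * w $ i else 0) +
        (\<Sum>j<n. if j = Suc i mod n then w $ j else 0)"
      by (subst sum.distrib[symmetric]) (rule sum.cong, auto)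
    also have "\<dots> = d i * w $ i + w $ (Suc i mod n)"
      using that n by (simp only: sum.delta finite_lessThan lessThan_iff mod_less_divisor if_True)
    finally have "d i * w $ i + w $ (Suc i mod n) = 0" ..
    then show ?thesis by (cases "d i * w $ i"; cases "w $ (Suc i mod n)") auto
  qed
  have pos: "w $ j = 0" if "0 < j" "j < n" for j
    using that
  proof (induction j)
    case (Suc j)
    then show ?case using step[of j] d0 by (cases j) auto
  qed simp
  have "w $ 0 = 0"
    using step[of "n - 1"] pos[of "n - 1"] n d0 by (cases "n = 1") auto
  then have "w $ i = 0" if "i < n" for i using pos[of i] that by (cases i) auto
  then have "w = 0\<^sub>v n" using w(1) by (intro eq_vecI) auto
  with w(2) show False ..
qed

(* rank_diag k r = (rank_diag k r + C) + C, with C the cyclic shift. *)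
lemma rank_diag_sum_of_invertibles:
  assumes "r < k"
  obtains P Q :: "bit mat" where "P \<in> carrier_mat k k" "Q \<in> carrier_mat k k"
    "det P \<noteq> 0" "det Q \<noteq> 0" "rank_diag k r = P + Q"
proof -
  define d :: "nat \<Rightarrow> bit" where "d i = (if k - r \<le> i then 1 else 0)" for i
  define C :: "bit mat" where "C = mat k k (\<lambda>(i, j). if j = Suc i mod k then 1 else 0)"
  have k: "k > 0" and d0: "d 0 = 0" using assms by (auto simp: d_def)
  have "rank_diag k r + C =
      mat k k (\<lambda>(i, j). (if i = j then d i else 0) + (if j = Suc i mod k then 1 else 0))"
    "C = mat k k (\<lambda>(i, j). (if i = j then 0 else 0) + (if j = Suc i mod k then 1 else 0))"
    by (auto intro!: eq_matI simp: rank_diag_def C_def d_def)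
  then have "det (rank_diag k r + C) \<noteq> 0" "det C \<noteq> 0"
    using det_diag_plus_cyclic_shift_nonzero[where d = d, OF k d0]
      det_diag_plus_cyclic_shift_nonzero[where d = "\<lambda>_. 0", OF k]
    by simp_all
  moreover have "rank_diag k r = (rank_diag k r + C) + C"
    by (rule eq_matI) (auto simp: C_def)
  ultimately show thesis by (intro that) (auto simp: C_def)
qed

lemma sum_of_invertibles:
  fixes B :: "bit mat"
  assumes B: "B \<in> carrier_mat k k"
  shows "\<exists>P Q. P \<in> carrier_mat k k \<and> Q \<in> carrier_mat k k \<and> invertible_mat P \<and>
    (invertible_mat Q \<or> Q = 0\<^sub>m k k) \<and> B = P + Q"
proof (cases "det B = 0")
  case False
  then show ?thesis using B by (intro exI[of _ B] exI[of _ "0\<^sub>m k k"]) (simp add: invertible_mat_iff_det)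
next
  case True
  obtain U V r where UV: "U \<in> carrier_mat k k" "V \<in> carrier_mat k k" "det U \<noteq> 0" "det V \<noteq> 0"
    "B = U * rank_diag k r * V"
    using rank_normal_form[OF B] by blast
  have "r < k"
  proof (rule ccontr)
    assume "\<not> r < k"
    then have "rank_diag k r = (1\<^sub>m k :: bit mat)" by (intro eq_matI) (auto simp: rank_diag_def)
    then show False using True UV by (simp add: det_mult[of _ k])
  qed
  then obtain P Q :: "bit mat" where PQ: "P \<in> carrier_mat k k" "Q \<in> carrier_mat k k"
    "det P \<noteq> 0" "det Q \<noteq> 0" "rank_diag k r = P + Q"
    by (rule rank_diag_sum_of_invertibles)
  have "B = U * P * V + U * Q * V"
    unfolding UV(5) PQ(5)
    by (simp only: mult_add_distrib_mat[OF UV(1) PQ(1,2)]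
        add_mult_distrib_mat[OF mult_carrier_mat[OF UV(1) PQ(1)] mult_carrier_mat[OF UV(1) PQ(2)]
            UV(2)])
  moreover have "invertible_mat (U * P * V)" "invertible_mat (U * Q * V)"
    using UV PQ by (simp_all add: invertible_mat_iff_det[of _ k] det_mult[of _ k]
        mult_carrier_mat[of _ k k])
  ultimately show ?thesis using UV PQ by (intro exI conjI) auto
qed

section \<open>Block-diagonal matrices, in-block factors and transversal layers\<close>

lemma block_index_less:
  assumes "i < N" "s < k"
  shows "i * k + s < N * (k::nat)"
proof -
  have "i * k + s < Suc i * k" using assms(2) by simp
  also have "\<dots> \<le> N * k" using assms(1) by (intro mult_le_mono1) simp
  finally show ?thesis .
qed

lemma block_sum:
  fixes f :: "nat \<Rightarrow> 'a::comm_monoid_add"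
  assumes "i < N" and zero: "\<And>s. s < N * k \<Longrightarrow> s div k \<noteq> i \<Longrightarrow> f s = 0"
  shows "(\<Sum>s<N * k. f s) = (\<Sum>s<k. f (i * k + s))"
proof -
  have "(\<Sum>s<N * k. f s) = (\<Sum>s\<in>{i * k..<i * k + k}. f s)"
  proof (rule sum.mono_neutral_right)
    show "{i * k..<i * k + k} \<subseteq> {..<N * k}"
      using block_index_less[OF assms(1), of _ k] by (auto simp: le_iff_add)
    show "\<forall>s\<in>{..<N * k} - {i * k..<i * k + k}. f s = 0"
    proof
      fix s assume s: "s \<in> {..<N * k} - {i * k..<i * k + k}"
      then have "k > 0" by (auto intro: gr0I)
      have "s div k * k \<le> s" "s < s div k * k + k"
        using div_mult_mod_eq[of s k] mod_less_divisor[OF \<open>k > 0\<close>, of s] by linarith+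
      then have "s div k \<noteq> i" using s by auto
      then show "f s = 0" using s zero by simp
    qed
  qed simp_all
  also have "\<dots> = (\<Sum>s<k. f (i * k + s))"
    using sum.shift_bounds_nat_ivl[of f 0 "i * k" k] by (simp add: atLeast0LessThan add.commute)
  finally show ?thesis .
qed

lemma less_block_iff: "k > 0 \<Longrightarrow> r < h * k \<longleftrightarrow> r div k < (h::nat)"
  by (simp add: div_less_iff_less_mult)

lemma div_diff_blocks: "h * k \<le> r \<Longrightarrow> (r - h * k) div k = r div k - (h::nat)"
  by (metis add_diff_cancel_left' diff_0_eq_0 div_by_0 div_mult_self4 le_add_diff_inverse mult.commute)

lemma mod_diff_blocks: "h * k \<le> r \<Longrightarrow> (r - h * k) mod k = r mod (k::nat)"
  by (metis le_add_diff_inverse mod_mult_self4 mult.commute)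

definition block_diagonal :: "nat \<Rightarrow> nat \<Rightarrow> (nat \<Rightarrow> 'a::zero mat) \<Rightarrow> 'a mat" where
  "block_diagonal N k G = mat (N * k) (N * k) (\<lambda>(r, c).
     if r div k = c div k then G (r div k) $$ (r mod k, c mod k) else 0)"

lemma block_diagonal_carrier [simp]: "block_diagonal N k G \<in> carrier_mat (N * k) (N * k)"
  and dim_block_diagonal [simp]:
    "dim_row (block_diagonal N k G) = N * k" "dim_col (block_diagonal N k G) = N * k"
  by (simp_all add: block_diagonal_def)

lemma block_diagonal_index [simp]:
  "r < N * k \<Longrightarrow> c < N * k \<Longrightarrow> block_diagonal N k G $$ (r, c) =
     (if r div k = c div k then G (r div k) $$ (r mod k, c mod k) else 0)"
  by (simp add: block_diagonal_def)

lemma block_diagonal_cong: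
  "(\<And>i. i < N \<Longrightarrow> G i = G' i) \<Longrightarrow> block_diagonal N k G = block_diagonal N k G'"
  by (rule eq_matI) (auto simp: less_mult_imp_div_less)

lemma block_diagonal_mult_index:
  assumes M: "M \<in> carrier_mat (N * k) p" and r: "r < N * k" and c: "c < p"
  shows "(block_diagonal N k G * M) $$ (r, c) =
    (\<Sum>s<k. G (r div k) $$ (r mod k, s) * M $$ (r div k * k + s, c))"
proof -
  have i: "r div k < N" using r by (rule less_mult_imp_div_less)
  have "(block_diagonal N k G * M) $$ (r, c) =
      (\<Sum>s<N * k. block_diagonal N k G $$ (r, s) * M $$ (s, c))"
    using M r c by (simp add: scalar_prod_def lessThan_atLeast0)
  also have "\<dots> = (\<Sum>s<k. block_diagonal N k G $$ (r, r div k * k + s) * M $$ (r div k * k + s, c))"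
    by (rule block_sum[OF i]) (use r in auto)
  also have "\<dots> = (\<Sum>s<k. G (r div k) $$ (r mod k, s) * M $$ (r div k * k + s, c))"
    using r block_index_less[OF i] by (intro sum.cong) auto
  finally show ?thesis .
qed

lemma block_diagonal_mult:
  assumes "\<And>i. i < N \<Longrightarrow> G i \<in> carrier_mat k k" "\<And>i. i < N \<Longrightarrow> G' i \<in> carrier_mat k k"
  shows "block_diagonal N k G * block_diagonal N k G' = block_diagonal N k (\<lambda>i. G i * G' i)"
proof (rule eq_matI)
  fix r c assume "r < dim_row (block_diagonal N k (\<lambda>i. G i * G' i))"
    "c < dim_col (block_diagonal N k (\<lambda>i. G i * G' i))"
  then have r: "r < N * k" and c: "c < N * k" by auto
  then have k: "k > 0" and i: "r div k < N" by (auto intro: gr0I less_mult_imp_div_less)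
  have "(block_diagonal N k G * block_diagonal N k G') $$ (r, c) =
      (\<Sum>s<k. G (r div k) $$ (r mod k, s) *
         (if r div k = c div k then G' (r div k) $$ (s, c mod k) else 0))"
    unfolding block_diagonal_mult_index[OF block_diagonal_carrier r c]
    using r c block_index_less[OF i] k by (intro sum.cong) auto
  also have "\<dots> = block_diagonal N k (\<lambda>i. G i * G' i) $$ (r, c)"
    using r c k assms[OF i] by (auto simp: scalar_prod_def lessThan_atLeast0)
  finally show "(block_diagonal N k G * block_diagonal N k G') $$ (r, c) =
      block_diagonal N k (\<lambda>i. G i * G' i) $$ (r, c)" .
qed auto

lemma block_diagonal_one: "block_diagonal N k (\<lambda>_. 1\<^sub>m k) = 1\<^sub>m (N * k)"
proof (rule eq_matI)
  fix r c assume "r < dim_row (1\<^sub>m (N * k) :: 'a mat)" "c < dim_col (1\<^sub>m (N * k) :: 'a mat)"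
  then have rc: "r < N * k" "c < N * k" by auto
  then have "k > 0" by (auto intro: gr0I)
  moreover have "r = c \<longleftrightarrow> r div k = c div k \<and> r mod k = c mod k"
    by (metis div_mult_mod_eq)
  ultimately show "block_diagonal N k (\<lambda>_. 1\<^sub>m k) $$ (r, c) = (1\<^sub>m (N * k) :: 'a mat) $$ (r, c)"
    using rc by auto
qed auto

lemma transpose_block_diagonal:
  assumes "\<And>i. i < N \<Longrightarrow> G i \<in> carrier_mat k k"
  shows "(block_diagonal N k G)\<^sup>T = block_diagonal N k (\<lambda>i. (G i)\<^sup>T)"
proof (rule eq_matI)
  fix r c assume "r < dim_row (block_diagonal N k (\<lambda>i. (G i)\<^sup>T))"
    "c < dim_col (block_diagonal N k (\<lambda>i. (G i)\<^sup>T))"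
  then have rc: "r < N * k" "c < N * k" by auto
  then have "k > 0" by (auto intro: gr0I)
  then show "(block_diagonal N k G)\<^sup>T $$ (r, c) = block_diagonal N k (\<lambda>i. (G i)\<^sup>T) $$ (r, c)"
    using rc assms[OF less_mult_imp_div_less[OF rc(1)]] by auto
qed auto

lemma diag_block_block_diagonal:
  assumes "i < N" "G i \<in> carrier_mat k k"
  shows "diag_block k i (block_diagonal N k G) = G i"
  by (rule eq_matI) (use assms block_index_less[OF assms(1)] in \<open>auto simp: diag_block_def\<close>)

lemma in_block_factor_carrier: "in_block_factor N k D \<Longrightarrow> D \<in> carrier_mat (N * k) (N * k)"
  by (simp add: in_block_factor_def)

lemma in_block_factor_block_diagonal:
  assumes "\<And>i. i < N \<Longrightarrow> G i \<in> carrier_mat k k"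
  shows "in_block_factor N k (block_diagonal N k G) \<longleftrightarrow> (\<forall>i<N. invertible_mat (G i))"
  using assms diag_block_block_diagonal by (auto simp: in_block_factor_def)

lemma block_diagonal_diag_block:
  assumes "in_block_factor N k D"
  shows "block_diagonal N k (\<lambda>i. diag_block k i D) = D"
proof (rule eq_matI)
  fix r c assume "r < dim_row D" "c < dim_col D"
  then have rc: "r < N * k" "c < N * k" using assms by (auto simp: in_block_factor_def)
  then have "k > 0" by (auto intro: gr0I)
  show "block_diagonal N k (\<lambda>i. diag_block k i D) $$ (r, c) = D $$ (r, c)"
  proof (cases "r div k = c div k")
    case True
    then have "r div k * k + r mod k = r" "r div k * k + c mod k = c" by (metis div_mult_mod_eq)+
    then show ?thesis using True rc \<open>k > 0\<close> by (simp add: diag_block_def)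
  qed (use assms rc in \<open>simp add: in_block_factor_def\<close>)
qed (use assms in \<open>auto simp: in_block_factor_def\<close>)

lemma in_block_factorE:
  assumes "in_block_factor N k D"
  obtains G where "\<forall>i<N. G i \<in> carrier_mat k k \<and> invertible_mat (G i)" "D = block_diagonal N k G"
  using assms block_diagonal_diag_block[OF assms]
  by (intro that[of "\<lambda>i. diag_block k i D"]) (auto simp: in_block_factor_def diag_block_def)

lemma in_block_factor_mult:
  assumes "in_block_factor N k A" "in_block_factor N k B"
  shows "in_block_factor N k (A * B)"
proof -
  obtain G where G: "\<forall>i<N. G i \<in> carrier_mat k k \<and> invertible_mat (G i)" "A = block_diagonal N k G"
    using assms(1) by (rule in_block_factorE)
  obtain G' where G': "\<forall>i<N. G' i \<in> carrier_mat k k \<and> invertible_mat (G' i)" "B = block_diagonal N k G'"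
    using assms(2) by (rule in_block_factorE)
  have "A * B = block_diagonal N k (\<lambda>i. G i * G' i)"
    using G G' by (simp add: block_diagonal_mult)
  moreover have "in_block_factor N k (block_diagonal N k (\<lambda>i. G i * G' i))"
    using G G' by (subst in_block_factor_block_diagonal) (auto intro!: invertible_mat_mult[of _ k])
  ultimately show ?thesis by simp
qed

lemma in_block_factor_one: "in_block_factor N k (1\<^sub>m (N * k))"
proof -
  have "invertible_mat (1\<^sub>m k :: bit mat)" by (simp add: invertible_mat_iff_det[of _ k])
  then show ?thesis
    using in_block_factor_block_diagonal[of N "\<lambda>_. 1\<^sub>m k" k] by (simp add: block_diagonal_one)
qed

lemma in_block_factor_transpose:
  assumes "in_block_factor N k D"
  shows "in_block_factor N k D\<^sup>T"
proof -
  obtain G where G: "\<forall>i<N. G i \<in> carrier_mat k k \<and> invertible_mat (G i)" "D = block_diagonal N k G"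
    using assms by (rule in_block_factorE)
  have "D\<^sup>T = block_diagonal N k (\<lambda>i. (G i)\<^sup>T)"
    using G by (simp add: transpose_block_diagonal)
  moreover have "\<forall>i<N. (G i)\<^sup>T \<in> carrier_mat k k \<and> invertible_mat (G i)\<^sup>T"
    using G(1) by (auto simp: invertible_mat_iff_det[of _ k] det_transpose)
  ultimately show ?thesis by (simp add: in_block_factor_block_diagonal)
qed

lemma in_block_factor_inverse:
  assumes "in_block_factor N k D"
  obtains D' where "in_block_factor N k D'" "D * D' = 1\<^sub>m (N * k)" "D' * D = 1\<^sub>m (N * k)"
proof -
  obtain G where G: "\<forall>i<N. G i \<in> carrier_mat k k \<and> invertible_mat (G i)" "D = block_diagonal N k G"
    using assms by (rule in_block_factorE)
  have "\<forall>i<N. \<exists>B \<in> carrier_mat k k. G i * B = 1\<^sub>m k \<and> B * G i = 1\<^sub>m k"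
    using G(1) invertible_mat_inverse by blast
  then obtain G' where G': "\<forall>i<N. G' i \<in> carrier_mat k k \<and> G i * G' i = 1\<^sub>m k \<and> G' i * G i = 1\<^sub>m k"
    by metis
  show thesis
  proof
    have "invertible_mat (G' i)" if "i < N" for i
      unfolding invertible_mat_def inverts_mat_def
      using that G G' by (intro conjI exI[of _ "G i"]) auto
    then show "in_block_factor N k (block_diagonal N k G')"
      using G' by (simp add: in_block_factor_block_diagonal)
    have "block_diagonal N k (\<lambda>i. G i * G' i) = 1\<^sub>m (N * k)"
      "block_diagonal N k (\<lambda>i. G' i * G i) = 1\<^sub>m (N * k)"
      using G' by (auto simp: block_diagonal_one[symmetric] intro: block_diagonal_cong)
    then show "D * block_diagonal N k G' = 1\<^sub>m (N * k)" "block_diagonal N k G' * D = 1\<^sub>m (N * k)"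
      using G G' by (simp_all add: block_diagonal_mult)
  qed
qed

lemma disjoint_pairsI:
  assumes "S \<subseteq> {..<N} \<times> {..<N}" "\<And>i j. (i, j) \<in> S \<Longrightarrow> i \<noteq> j"
    and "\<And>i j i' j'. (i, j) \<in> S \<Longrightarrow> (i', j') \<in> S \<Longrightarrow> (i, j) \<noteq> (i', j') \<Longrightarrow>
      i \<noteq> i' \<and> i \<noteq> j' \<and> j \<noteq> i' \<and> j \<noteq> j'"
  shows "disjoint_pairs N S"
  unfolding disjoint_pairs_def
proof (intro conjI)
  show "\<forall>(i, j)\<in>S. \<forall>(i', j')\<in>S. (i, j) \<noteq> (i', j') \<longrightarrow> i \<noteq> i' \<and> i \<noteq> j' \<and> j \<noteq> i' \<and> j \<noteq> j'"
    using assms(3) by blast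
qed (use assms(1,2) in auto)

lemma transversal_layer_carrier: "transversal_layer N k L \<Longrightarrow> L \<in> carrier_mat (N * k) (N * k)"
  by (auto simp: transversal_layer_def layer_matrix_def)

lemma transversal_layer_one: "transversal_layer N k (1\<^sub>m (N * k))"
proof -
  have "layer_matrix N k {} = 1\<^sub>m (N * k)" by (rule eq_matI) (auto simp: layer_matrix_def)
  then show ?thesis
    unfolding transversal_layer_def disjoint_pairs_def by (intro exI[of _ "{}"]) simp
qed

lemma transversal_layer_transpose:
  assumes "transversal_layer N k L"
  shows "transversal_layer N k L\<^sup>T"
proof -
  obtain S where S: "disjoint_pairs N S" "L = layer_matrix N k S"
    using assms by (auto simp: transversal_layer_def)
  have "L\<^sup>T = layer_matrix N k (S\<inverse>)"
    unfolding S(2) by (rule eq_matI) (auto simp: layer_matrix_def)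
  moreover have "disjoint_pairs N (S\<inverse>)"
    using S(1) unfolding disjoint_pairs_def by fast
  ultimately show ?thesis by (auto simp: transversal_layer_def)
qed

section \<open>A normal form for layered products\<close>

(* D\<^sub>0 L\<^sub>1 D\<^sub>1 ... L\<^sub>m D\<^sub>m with exactly m layers: padding with identity layers is free, and two
   products with the same m can then be combined factorwise on disjoint halves. *)
inductive alternating_product :: "nat \<Rightarrow> nat \<Rightarrow> nat \<Rightarrow> bit mat \<Rightarrow> bool" for N k where
  in_block: "in_block_factor N k D \<Longrightarrow> alternating_product N k 0 D"
| layer: "in_block_factor N k D \<Longrightarrow> transversal_layer N k L \<Longrightarrow> alternating_product N k m M \<Longrightarrow>
    alternating_product N k (Suc m) (D * L * M)"

lemma alternating_product_carrier:
  "alternating_product N k m M \<Longrightarrow> M \<in> carrier_mat (N * k) (N * k)"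
proof (induction rule: alternating_product.induct)
  case (layer D L m M)
  then show ?case
    using in_block_factor_carrier[OF layer(1)] transversal_layer_carrier[OF layer(2)] by simp
qed (rule in_block_factor_carrier)

lemma alternating_product_mult:
  assumes "alternating_product N k m A" "alternating_product N k m' B"
  shows "alternating_product N k (m + m') (A * B)"
  using assms(1)
proof (induction rule: alternating_product.induct)
  case (in_block D)
  from assms(2) show ?case
  proof cases
    case in_block
    then show ?thesis using in_block_factor_mult[OF \<open>in_block_factor N k D\<close>]
      by (auto intro: alternating_product.in_block)
  next
    case (layer D' L m'' M)
    have "D \<in> carrier_mat (N * k) (N * k)" "D' \<in> carrier_mat (N * k) (N * k)"
      "L \<in> carrier_mat (N * k) (N * k)" "M \<in> carrier_mat (N * k) (N * k)"
      using in_block.hyps layer in_block_factor_carrier transversal_layer_carrier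
        alternating_product_carrier by blast+
    then have "D * (D' * L * M) = (D * D') * L * M"
      by (simp add: assoc_mult_mat[of _ "N * k" "N * k" _ "N * k" _ "N * k"])
    then show ?thesis
      using layer in_block_factor_mult[OF in_block.hyps] by (auto intro: alternating_product.layer)
  qed
next
  case (layer D L m M)
  have "D * L \<in> carrier_mat (N * k) (N * k)" "M \<in> carrier_mat (N * k) (N * k)"
    "B \<in> carrier_mat (N * k) (N * k)"
    using layer.hyps assms(2) in_block_factor_carrier transversal_layer_carrier
      alternating_product_carrier mult_carrier_mat by blast+
  then have "D * L * M * B = D * L * (M * B)" by (rule assoc_mult_mat)
  then show ?case using layer by (auto intro: alternating_product.layer)
qed

lemma alternating_product_one: "alternating_product N k m (1\<^sub>m (N * k))"
proof (induction m)
  case 0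
  show ?case by (rule alternating_product.in_block[OF in_block_factor_one])
next
  case (Suc m)
  have "alternating_product N k (Suc m) (1\<^sub>m (N * k) * 1\<^sub>m (N * k) * 1\<^sub>m (N * k))"
    by (rule alternating_product.layer[OF in_block_factor_one transversal_layer_one Suc])
  then show ?case by simp
qed

abbreviation factor_product :: "nat \<Rightarrow> (bool \<times> bit mat) list \<Rightarrow> bit mat" where
  "factor_product n fs \<equiv> foldr (\<lambda>f A. snd f * A) fs (1\<^sub>m n)"

lemma alternating_product_factor_product:
  assumes "\<forall>f \<in> set fs. if fst f then transversal_layer N k (snd f) else in_block_factor N k (snd f)"
    and "length (filter fst fs) \<le> m"
  shows "alternating_product N k m (factor_product (N * k) fs)"
  using assms
proof (induction fs arbitrary: m)
  case Nil
  then show ?case by (simp add: alternating_product_one)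
next
  case (Cons f fs)
  show ?case
  proof (cases "fst f")
    case True
    then obtain m' where m: "m = Suc m'" "length (filter fst fs) \<le> m'"
      using Cons.prems(2) by (cases m) auto
    have "alternating_product N k (Suc m') (1\<^sub>m (N * k) * snd f * factor_product (N * k) fs)"
      using Cons True m by (intro alternating_product.layer in_block_factor_one) auto
    moreover have "snd f \<in> carrier_mat (N * k) (N * k)"
      using Cons.prems True by (auto intro: transversal_layer_carrier)
    ultimately show ?thesis using m True by simp
  next
    case False
    have "alternating_product N k (0 + m) (snd f * factor_product (N * k) fs)"
      using Cons False by (intro alternating_product_mult alternating_product.in_block) auto
    then show ?thesis by simp
  qed
qed

lemma layered_product_iff_alternating_product:
  "layered_product N k m M \<longleftrightarrow> alternating_product N k m M"
proof
  assume "layered_product N k m M"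
  then show "alternating_product N k m M"
    unfolding layered_product_def using alternating_product_factor_product by blast
next
  assume "alternating_product N k m M"
  then show "layered_product N k m M"
  proof (induction rule: alternating_product.induct)
    case (in_block D)
    then show ?case unfolding layered_product_def
      using in_block_factor_carrier[OF in_block] by (intro exI[of _ "[(False, D)]"]) simp
  next
    case (layer D L m M)
    then obtain fs where fs: "M = factor_product (N * k) fs"
      "\<forall>f \<in> set fs. if fst f then transversal_layer N k (snd f) else in_block_factor N k (snd f)"
      "length (filter fst fs) \<le> m"
      unfolding layered_product_def by blast
    have "D * L * M = D * (L * M)"
      using layer.hyps
      by (simp add: assoc_mult_mat[of _ "N * k" "N * k" _ "N * k" _ "N * k"]
          in_block_factor_carrier transversal_layer_carrier alternating_product_carrier)
    then show ?case unfolding layered_product_def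
      using fs layer.hyps by (intro exI[of _ "(False, D) # (True, L) # fs"]) auto
  qed
qed

lemma layered_product_mult:
  "layered_product N k m A \<Longrightarrow> layered_product N k m' B \<Longrightarrow> layered_product N k (m + m') (A * B)"
  by (simp add: layered_product_iff_alternating_product alternating_product_mult)

lemma layered_product_in_block_factor:
  "in_block_factor N k D \<Longrightarrow> layered_product N k 0 D"
  by (simp add: layered_product_iff_alternating_product alternating_product.in_block)

lemma layered_product_transversal_layer:
  assumes "transversal_layer N k L"
  shows "layered_product N k 1 L"
proof -
  have "alternating_product N k (Suc 0) (1\<^sub>m (N * k) * L * 1\<^sub>m (N * k))"
    by (intro alternating_product.layer in_block_factor_one alternating_product_one assms)
  then show ?thesis
    using transversal_layer_carrier[OF assms] by (simp add: layered_product_iff_alternating_product)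
qed

lemma layered_product_transpose:
  assumes "layered_product N k m M"
  shows "layered_product N k m M\<^sup>T"
proof -
  have "alternating_product N k m M" using assms by (simp add: layered_product_iff_alternating_product)
  then show ?thesis
  proof (induction rule: alternating_product.induct)
    case (in_block D)
    then show ?case by (intro layered_product_in_block_factor in_block_factor_transpose)
  next
    case (layer D L m M)
    have D: "D \<in> carrier_mat (N * k) (N * k)" and L: "L \<in> carrier_mat (N * k) (N * k)"
      and M: "M \<in> carrier_mat (N * k) (N * k)"
      using layer.hyps in_block_factor_carrier transversal_layer_carrier alternating_product_carrier
      by blast+
    have "(D * L * M)\<^sup>T = M\<^sup>T * L\<^sup>T * D\<^sup>T"
      using D L M by (simp add: transpose_mult[of _ "N * k" "N * k" _ "N * k"])
    moreover have "layered_product N k (m + 1 + 0) (M\<^sup>T * L\<^sup>T * D\<^sup>T)"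
      using layer by (intro layered_product_mult layered_product_transversal_layer
          transversal_layer_transpose layered_product_in_block_factor in_block_factor_transpose)
    ultimately show ?case by simp
  qed
qed

section \<open>Two halves in parallel\<close>

definition block_diag2 :: "nat \<Rightarrow> 'a::zero mat \<Rightarrow> 'a mat \<Rightarrow> 'a mat" where
  "block_diag2 n A D = four_block_mat A (0\<^sub>m n n) (0\<^sub>m n n) D"

lemma block_diag2_mult:
  assumes "A \<in> carrier_mat n n" "A' \<in> carrier_mat n n" "D \<in> carrier_mat n n" "D' \<in> carrier_mat n n"
  shows "block_diag2 n A D * block_diag2 n A' D' = block_diag2 n (A * A') (D * D')"
  using assms mult_four_block_mat[OF assms(1) zero_carrier_mat zero_carrier_mat assms(3)
      assms(2) zero_carrier_mat zero_carrier_mat assms(4)]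
  by (simp add: block_diag2_def)

lemma block_diag2_block_diagonal:
  assumes k: "k > 0"
  shows "block_diag2 (h * k) (block_diagonal h k G) (block_diagonal h k G') =
    block_diagonal (2 * h) k (\<lambda>i. if i < h then G i else G' (i - h))"
proof (rule eq_matI)
  fix r c assume "r < dim_row (block_diagonal (2 * h) k (\<lambda>i. if i < h then G i else G' (i - h)))"
    "c < dim_col (block_diagonal (2 * h) k (\<lambda>i. if i < h then G i else G' (i - h)))"
  then have "r < h * k + h * k" "c < h * k + h * k" by (simp_all add: algebra_simps)
  then show "block_diag2 (h * k) (block_diagonal h k G) (block_diagonal h k G') $$ (r, c) =
      block_diagonal (2 * h) k (\<lambda>i. if i < h then G i else G' (i - h)) $$ (r, c)"
    using less_block_iff[OF k, of r h] less_block_iff[OF k, of c h] div_diff_blocks[of h k r]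
      div_diff_blocks[of h k c] mod_diff_blocks[of h k r] mod_diff_blocks[of h k c]
    by (auto simp: block_diag2_def algebra_simps)
qed (simp_all add: block_diag2_def algebra_simps)

lemma in_block_factor_block_diag2:
  assumes k: "k > 0" and "in_block_factor h k A" "in_block_factor h k D"
  shows "in_block_factor (2 * h) k (block_diag2 (h * k) A D)"
proof -
  obtain G where G: "\<forall>i<h. G i \<in> carrier_mat k k \<and> invertible_mat (G i)" "A = block_diagonal h k G"
    using assms(2) by (rule in_block_factorE)
  obtain G' where G': "\<forall>i<h. G' i \<in> carrier_mat k k \<and> invertible_mat (G' i)" "D = block_diagonal h k G'"
    using assms(3) by (rule in_block_factorE)
  show ?thesis
    using G G' by (simp add: block_diag2_block_diagonal[OF k] in_block_factor_block_diagonal)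
qed

lemma disjoint_pairs_union_shift:
  assumes S: "disjoint_pairs h S" and S': "disjoint_pairs h S'"
  shows "disjoint_pairs (2 * h) (S \<union> map_prod ((+) h) ((+) h) ` S')"
proof (rule disjoint_pairsI)
  let ?T = "map_prod ((+) h) ((+) h) ` S'"
  have T: "(a, b) \<in> ?T \<longleftrightarrow> h \<le> a \<and> h \<le> b \<and> (a - h, b - h) \<in> S'" for a b
    by (force simp: image_iff)
  have bound: "i < h" "j < h" if "(i, j) \<in> S" for i j
    using S that by (auto simp: disjoint_pairs_def)
  show "S \<union> ?T \<subseteq> {..<2 * h} \<times> {..<2 * h}" "\<And>i j. (i, j) \<in> S \<union> ?T \<Longrightarrow> i \<noteq> j"
    using S S' by (auto simp: disjoint_pairs_def)
  fix i j i' j'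
  assume ij: "(i, j) \<in> S \<union> ?T" and ij': "(i', j') \<in> S \<union> ?T" and ne: "(i, j) \<noteq> (i', j')"
  show "i \<noteq> i' \<and> i \<noteq> j' \<and> j \<noteq> i' \<and> j \<noteq> j'"
  proof (cases "(i, j) \<in> S"; cases "(i', j') \<in> S")
    assume "(i, j) \<in> S" "(i', j') \<in> S"
    then show ?thesis using S ne unfolding disjoint_pairs_def by fast
  next
    assume "(i, j) \<notin> S" "(i', j') \<notin> S"
    then have "(i - h, j - h) \<in> S'" "(i' - h, j' - h) \<in> S'" "h \<le> i" "h \<le> j" "h \<le> i'" "h \<le> j'"
      using ij ij' T by auto
    moreover have "(i - h, j - h) \<noteq> (i' - h, j' - h)" using ne calculation(3-) by auto
    ultimately show ?thesis using S' unfolding disjoint_pairs_def by fastforce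
  next
    assume "(i, j) \<in> S" "(i', j') \<notin> S"
    then have "i < h" "j < h" "h \<le> i'" "h \<le> j'" using ij' T bound by auto
    then show ?thesis by auto
  next
    assume "(i, j) \<notin> S" "(i', j') \<in> S"
    then have "h \<le> i" "h \<le> j" "i' < h" "j' < h" using ij T bound by auto
    then show ?thesis by auto
  qed
qed

lemma block_diag2_layer_matrix:
  assumes k: "k > 0" and S: "S \<subseteq> {..<h} \<times> {..<h}" and S': "S' \<subseteq> {..<h} \<times> {..<h}"
  shows "block_diag2 (h * k) (layer_matrix h k S) (layer_matrix h k S') =
    layer_matrix (2 * h) k (S \<union> map_prod ((+) h) ((+) h) ` S')"
proof (rule eq_matI)
  fix r c assume "r < dim_row (layer_matrix (2 * h) k (S \<union> map_prod ((+) h) ((+) h) ` S'))"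
    "c < dim_col (layer_matrix (2 * h) k (S \<union> map_prod ((+) h) ((+) h) ` S'))"
  then have rc: "r < h * k + h * k" "c < h * k + h * k"
    by (simp_all add: layer_matrix_def algebra_simps)
  have T: "(a, b) \<in> map_prod ((+) h) ((+) h) ` S' \<longleftrightarrow> h \<le> a \<and> h \<le> b \<and> (a - h, b - h) \<in> S'" for a b
    by (force simp: image_iff)
  note idx = less_block_iff[OF k, of r h] less_block_iff[OF k, of c h]
  show "block_diag2 (h * k) (layer_matrix h k S) (layer_matrix h k S') $$ (r, c) =
      layer_matrix (2 * h) k (S \<union> map_prod ((+) h) ((+) h) ` S') $$ (r, c)"
  proof (cases "r < h * k"; cases "c < h * k")
    assume "r < h * k" "c < h * k"
    then show ?thesis using rc idx T by (simp add: block_diag2_def layer_matrix_def)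
  next
    assume "r < h * k" "\<not> c < h * k"
    then show ?thesis using rc idx T S by (auto simp: block_diag2_def layer_matrix_def)
  next
    assume "\<not> r < h * k" "c < h * k"
    then show ?thesis using rc idx T S by (auto simp: block_diag2_def layer_matrix_def)
  next
    assume "\<not> r < h * k" "\<not> c < h * k"
    moreover have "r - h * k = c - h * k \<longleftrightarrow> r = c" using calculation by auto
    ultimately show ?thesis
      using rc idx T S div_diff_blocks[of h k r] div_diff_blocks[of h k c]
        mod_diff_blocks[of h k r] mod_diff_blocks[of h k c]
      by (auto simp: block_diag2_def layer_matrix_def)
  qed
qed (simp_all add: block_diag2_def layer_matrix_def algebra_simps)

lemma transversal_layer_block_diag2:
  assumes k: "k > 0" and "transversal_layer h k L" "transversal_layer h k L'"
  shows "transversal_layer (2 * h) k (block_diag2 (h * k) L L')"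
proof -
  obtain S S' where S: "disjoint_pairs h S" "L = layer_matrix h k S"
    and S': "disjoint_pairs h S'" "L' = layer_matrix h k S'"
    using assms(2,3) by (auto simp: transversal_layer_def)
  have "block_diag2 (h * k) L L' = layer_matrix (2 * h) k (S \<union> map_prod ((+) h) ((+) h) ` S')"
    using S S' by (simp add: disjoint_pairs_def block_diag2_layer_matrix[OF k])
  then show ?thesis
    unfolding transversal_layer_def using disjoint_pairs_union_shift[OF S(1) S'(1)] by blast
qed

lemma alternating_product_block_diag2:
  assumes k: "k > 0" and "alternating_product h k m A" "alternating_product h k m D"
  shows "alternating_product (2 * h) k m (block_diag2 (h * k) A D)"
  using assms(2,3)
proof (induction arbitrary: D rule: alternating_product.induct)
  case (in_block A)
  from in_block.prems have "in_block_factor h k D"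
    by (cases rule: alternating_product.cases) auto
  then show ?case
    by (intro alternating_product.in_block in_block_factor_block_diag2[OF k in_block.hyps])
next
  case (layer A0 L m M)
  from layer.prems obtain D0 L' D' where D: "D = D0 * L' * D'" "in_block_factor h k D0"
    "transversal_layer h k L'" "alternating_product h k m D'"
    by (cases rule: alternating_product.cases) auto
  have c: "A0 \<in> carrier_mat (h * k) (h * k)" "L \<in> carrier_mat (h * k) (h * k)"
    "M \<in> carrier_mat (h * k) (h * k)" "D0 \<in> carrier_mat (h * k) (h * k)"
    "L' \<in> carrier_mat (h * k) (h * k)" "D' \<in> carrier_mat (h * k) (h * k)"
    using layer.hyps D in_block_factor_carrier transversal_layer_carrier alternating_product_carrier
    by blast+
  have "block_diag2 (h * k) (A0 * L * M) D =
      block_diag2 (h * k) A0 D0 * block_diag2 (h * k) L L' * block_diag2 (h * k) M D'"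
    using c by (simp add: D(1) block_diag2_mult)
  then show ?case
    using layer D by (simp only:) (intro alternating_product.layer in_block_factor_block_diag2[OF k]
        transversal_layer_block_diag2[OF k] layer.IH)
qed

lemma layered_product_block_diag2:
  assumes "k > 0" "layered_product h k m A" "layered_product h k m D"
  shows "layered_product (2 * h) k m (block_diag2 (h * k) A D)"
  using assms alternating_product_block_diag2 by (simp add: layered_product_iff_alternating_product)

section \<open>Transvections between the two halves\<close>

definition block_transvection :: "nat \<Rightarrow> 'a::{zero,one} mat \<Rightarrow> 'a mat" where
  "block_transvection n M = four_block_mat (1\<^sub>m n) (0\<^sub>m n n) M (1\<^sub>m n)"

lemma block_transvection_add:
  fixes M :: "'a::semiring_1 mat"
  assumes "M \<in> carrier_mat n n" "M' \<in> carrier_mat n n"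
  shows "block_transvection n M * block_transvection n M' = block_transvection n (M + M')"
  using assms mult_four_block_mat[OF one_carrier_mat zero_carrier_mat assms(1) one_carrier_mat
      one_carrier_mat zero_carrier_mat assms(2) one_carrier_mat]
  by (simp add: block_transvection_def one_carrier_mat)

lemma block_transvection_zero: "block_transvection n (0\<^sub>m n n) = 1\<^sub>m (n + n)"
  by (simp add: block_transvection_def)

lemma block_transvection_conjugate:
  fixes E :: "'a::semiring_1 mat"
  assumes "E \<in> carrier_mat n n" "E' \<in> carrier_mat n n" "M \<in> carrier_mat n n" "E * E' = 1\<^sub>m n"
  shows "block_diag2 n (1\<^sub>m n) E * block_transvection n M * block_diag2 n (1\<^sub>m n) E' =
    block_transvection n (E * M)"
proof -
  have "block_diag2 n (1\<^sub>m n) E * block_transvection n M = four_block_mat (1\<^sub>m n) (0\<^sub>m n n) (E * M) E"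
    using assms mult_four_block_mat[OF one_carrier_mat zero_carrier_mat zero_carrier_mat assms(1)
        one_carrier_mat zero_carrier_mat assms(3) one_carrier_mat]
    by (simp add: block_diag2_def block_transvection_def one_carrier_mat)
  also have "\<dots> * block_diag2 n (1\<^sub>m n) E' = block_transvection n (E * M)"
    using assms mult_four_block_mat[OF one_carrier_mat zero_carrier_mat mult_carrier_mat[OF assms(1,3)]
        assms(1) one_carrier_mat zero_carrier_mat zero_carrier_mat assms(2)]
    by (simp add: block_diag2_def block_transvection_def)
  finally show ?thesis .
qed

definition matching_blocks :: "nat \<Rightarrow> nat \<Rightarrow> (nat \<Rightarrow> nat) \<Rightarrow> (nat \<Rightarrow> 'a::zero mat) \<Rightarrow> 'a mat" where
  "matching_blocks h k \<sigma> G = mat (h * k) (h * k) (\<lambda>(r, c).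
     if c div k = \<sigma> (r div k) then G (r div k) $$ (r mod k, c mod k) else 0)"

lemma matching_blocks_carrier [simp]: "matching_blocks h k \<sigma> G \<in> carrier_mat (h * k) (h * k)"
  and dim_matching_blocks [simp]:
    "dim_row (matching_blocks h k \<sigma> G) = h * k" "dim_col (matching_blocks h k \<sigma> G) = h * k"
  by (simp_all add: matching_blocks_def)

lemma matching_blocks_add:
  fixes G :: "nat \<Rightarrow> 'a::monoid_add mat"
  assumes "\<And>i. i < h \<Longrightarrow> G i \<in> carrier_mat k k" "\<And>i. i < h \<Longrightarrow> G' i \<in> carrier_mat k k"
  shows "matching_blocks h k \<sigma> (\<lambda>i. G i + G' i) = matching_blocks h k \<sigma> G + matching_blocks h k \<sigma> G'"
proof (rule eq_matI)
  fix r c assume "r < dim_row (matching_blocks h k \<sigma> G + matching_blocks h k \<sigma> G')"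
    "c < dim_col (matching_blocks h k \<sigma> G + matching_blocks h k \<sigma> G')"
  then have rc: "r < h * k" "c < h * k" by auto
  then have "k > 0" by (auto intro: gr0I)
  then show "matching_blocks h k \<sigma> (\<lambda>i. G i + G' i) $$ (r, c) =
      (matching_blocks h k \<sigma> G + matching_blocks h k \<sigma> G') $$ (r, c)"
    using rc assms[OF less_mult_imp_div_less[OF rc(1)]] by (simp add: matching_blocks_def)
qed (simp_all add: matching_blocks_def)

lemma matching_blocks_cong:
  "(\<And>i. i < h \<Longrightarrow> G i = G' i) \<Longrightarrow> matching_blocks h k \<sigma> G = matching_blocks h k \<sigma> G'"
  by (rule eq_matI) (auto simp: matching_blocks_def less_mult_imp_div_less)

lemma block_diagonal_mult_matching_blocks:
  assumes "\<And>i. i < h \<Longrightarrow> G i \<in> carrier_mat k k" "\<And>i. i < h \<Longrightarrow> F i \<in> carrier_mat k k"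
  shows "block_diagonal h k G * matching_blocks h k \<sigma> F = matching_blocks h k \<sigma> (\<lambda>i. G i * F i)"
proof (rule eq_matI)
  fix r c assume "r < dim_row (matching_blocks h k \<sigma> (\<lambda>i. G i * F i))"
    "c < dim_col (matching_blocks h k \<sigma> (\<lambda>i. G i * F i))"
  then have r: "r < h * k" and c: "c < h * k" by (auto simp: matching_blocks_def)
  then have k: "k > 0" and i: "r div k < h" by (auto intro: gr0I less_mult_imp_div_less)
  have "(block_diagonal h k G * matching_blocks h k \<sigma> F) $$ (r, c) =
      (\<Sum>s<k. G (r div k) $$ (r mod k, s) *
         (if c div k = \<sigma> (r div k) then F (r div k) $$ (s, c mod k) else 0))"
    unfolding block_diagonal_mult_index[OF matching_blocks_carrier r c]
    using c block_index_less[OF i] k by (intro sum.cong) (auto simp: matching_blocks_def)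
  also have "\<dots> = matching_blocks h k \<sigma> (\<lambda>i. G i * F i) $$ (r, c)"
    using r c k assms[OF i] by (auto simp: matching_blocks_def scalar_prod_def lessThan_atLeast0)
  finally show "(block_diagonal h k G * matching_blocks h k \<sigma> F) $$ (r, c) =
      matching_blocks h k \<sigma> (\<lambda>i. G i * F i) $$ (r, c)" .
qed (auto simp: matching_blocks_def)

lemma transversal_layer_matching_blocks:
  assumes k: "k > 0" and inj: "inj_on \<sigma> {..<h}" and range: "\<And>i. i < h \<Longrightarrow> \<sigma> i < h"
  shows "transversal_layer (2 * h) k (block_transvection (h * k)
           (matching_blocks h k \<sigma> (\<lambda>i. if P i then 1\<^sub>m k else 0\<^sub>m k k)))"
proof -
  define S where "S = {(h + i, \<sigma> i) | i. i < h \<and> P i}"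
  have "disjoint_pairs (2 * h) S"
    by (rule disjoint_pairsI) (use inj in \<open>auto simp: S_def dest: inj_onD range\<close>)
  moreover have "block_transvection (h * k) (matching_blocks h k \<sigma> (\<lambda>i. if P i then 1\<^sub>m k else 0\<^sub>m k k)) =
      layer_matrix (2 * h) k S"
  proof (rule eq_matI)
    fix r c assume "r < dim_row (layer_matrix (2 * h) k S)" "c < dim_col (layer_matrix (2 * h) k S)"
    then have rc: "r < h * k + h * k" "c < h * k + h * k"
      by (simp_all add: layer_matrix_def algebra_simps)
    have S: "(a, b) \<in> S \<longleftrightarrow> h \<le> a \<and> a < 2 * h \<and> b = \<sigma> (a - h) \<and> P (a - h)" for a b
      by (force simp: S_def)
    have S_col: "b < h" if "(a, b) \<in> S" for a b
      using that range by (auto simp: S_def)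
    have rdiv: "r div k < 2 * h" using rc by (simp add: less_mult_imp_div_less algebra_simps)
    then have "\<sigma> (r div k - h) < h" by (intro range) simp
    note idx = rdiv this S_col less_block_iff[OF k, of r h] less_block_iff[OF k, of c h]
      div_diff_blocks[of h k r] mod_diff_blocks[of h k r]
    show "block_transvection (h * k)
        (matching_blocks h k \<sigma> (\<lambda>i. if P i then 1\<^sub>m k else 0\<^sub>m k k)) $$ (r, c) =
        layer_matrix (2 * h) k S $$ (r, c)"
    proof (cases "r < h * k"; cases "c < h * k")
      assume "\<not> r < h * k" "c < h * k"
      then show ?thesis using rc idx S k range by (auto simp: block_transvection_def layer_matrix_def
          matching_blocks_def algebra_simps)
    next
      assume "\<not> r < h * k" "\<not> c < h * k"
      moreover have "(r div k, c div k) \<notin> S" using calculation idx by auto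
      ultimately show ?thesis using rc by (auto simp: block_transvection_def layer_matrix_def)
    qed (use rc idx S in \<open>auto simp: block_transvection_def layer_matrix_def algebra_simps\<close>)
  qed (simp_all add: block_transvection_def layer_matrix_def algebra_simps)
  ultimately show ?thesis unfolding transversal_layer_def by blast
qed

(* The layer pairing codeblock h + i with \<sigma> i, conjugated by the in-block factor acting as G i
   (or as 1 where G i = 0) on codeblock h + i. *)
lemma layered_product_matching_transvection:
  assumes k: "k > 0" and inj: "inj_on \<sigma> {..<h}" and range: "\<And>i. i < h \<Longrightarrow> \<sigma> i < h"
    and G: "\<And>i. i < h \<Longrightarrow> G i \<in> carrier_mat k k \<and> (invertible_mat (G i) \<or> G i = 0\<^sub>m k k)"
  shows "layered_product (2 * h) k 1 (block_transvection (h * k) (matching_blocks h k \<sigma> G))"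
proof -
  define P where "P i \<longleftrightarrow> G i \<noteq> 0\<^sub>m k k" for i
  define E where "E = block_diagonal h k (\<lambda>i. if P i then G i else 1\<^sub>m k)"
  have "invertible_mat (1\<^sub>m k :: bit mat)" by (simp add: invertible_mat_iff_det[of _ k])
  then have E: "in_block_factor h k E"
    unfolding E_def using G by (subst in_block_factor_block_diagonal) (auto simp: P_def)
  obtain E' where E': "in_block_factor h k E'" "E * E' = 1\<^sub>m (h * k)"
    using in_block_factor_inverse[OF E] by blast
  define Mask :: "bit mat" where "Mask = matching_blocks h k \<sigma> (\<lambda>i. if P i then 1\<^sub>m k else 0\<^sub>m k k)"
  have "E * Mask =
      matching_blocks h k \<sigma> (\<lambda>i. (if P i then G i else 1\<^sub>m k) * (if P i then 1\<^sub>m k else 0\<^sub>m k k))"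
    unfolding E_def Mask_def using G by (intro block_diagonal_mult_matching_blocks) auto
  also have "\<dots> = matching_blocks h k \<sigma> G"
    by (intro matching_blocks_cong) (auto simp: P_def dest!: G)
  finally have "block_transvection (h * k) (matching_blocks h k \<sigma> G) =
      block_diag2 (h * k) (1\<^sub>m (h * k)) E * block_transvection (h * k) Mask *
      block_diag2 (h * k) (1\<^sub>m (h * k)) E'"
    using E E' by (simp add: block_transvection_conjugate Mask_def in_block_factor_carrier)
  moreover have "layered_product (2 * h) k (0 + 1 + 0) \<dots>"
    unfolding Mask_def
    by (intro layered_product_mult layered_product_in_block_factor layered_product_transversal_layer
        in_block_factor_block_diag2 in_block_factor_one transversal_layer_matching_blocks E E' k
            inj range)
  ultimately show ?thesis by simp
qed

definition sub_block :: "nat \<Rightarrow> nat \<Rightarrow> nat \<Rightarrow> 'a mat \<Rightarrow> 'a mat" where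
  "sub_block k i j M = mat k k (\<lambda>(r, c). M $$ (i * k + r, j * k + c))"

definition offset_truncation :: "nat \<Rightarrow> nat \<Rightarrow> nat \<Rightarrow> 'a::zero mat \<Rightarrow> 'a mat" where
  "offset_truncation h k t M = mat (h * k) (h * k) (\<lambda>(r, c).
     if (c div k + h - r div k) mod h < t then M $$ (r, c) else 0)"

lemma offset_truncation_carrier [simp]: "offset_truncation h k t M \<in> carrier_mat (h * k) (h * k)"
  by (simp add: offset_truncation_def)

lemma cyclic_offset_iff:
  assumes "i < h" "j < h" "t < (h::nat)"
  shows "(j + h - i) mod h = t \<longleftrightarrow> j = (i + t) mod h"
proof -
  have red: "x mod h = (if x < h then x else x - h)" if "x < 2 * h" for x
    using that by (simp add: mod_if le_mod_geq)
  have "i + t < 2 * h" "j + h - i < 2 * h" using assms by auto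
  from red[OF this(1)] red[OF this(2)] show ?thesis using assms by auto
qed

lemma inj_on_cyclic_shift: "inj_on (\<lambda>i. (i + t) mod h) {..<h::nat}"
proof (rule inj_onI)
  fix i j assume "i \<in> {..<h}" "j \<in> {..<h}" "(i + t) mod h = (j + t) mod h"
  then have "[i + t = j + t] (mod h)" by (simp add: cong_def)
  then show "i = j" using \<open>i \<in> {..<h}\<close> \<open>j \<in> {..<h}\<close>
    by (auto simp: cong_add_rcancel_nat intro: cong_less_modulus_unique_nat)
qed

lemma offset_truncation_Suc:
  fixes M :: "'a::monoid_add mat"
  assumes "t < h" "M \<in> carrier_mat (h * k) (h * k)"
  shows "offset_truncation h k (Suc t) M = offset_truncation h k t M +
    matching_blocks h k (\<lambda>i. (i + t) mod h) (\<lambda>i. sub_block k i ((i + t) mod h) M)"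
proof (rule eq_matI)
  fix r c assume "r < dim_row (offset_truncation h k t M +
    matching_blocks h k (\<lambda>i. (i + t) mod h) (\<lambda>i. sub_block k i ((i + t) mod h) M))"
    "c < dim_col (offset_truncation h k t M +
    matching_blocks h k (\<lambda>i. (i + t) mod h) (\<lambda>i. sub_block k i ((i + t) mod h) M))"
  then have rc: "r < h * k" "c < h * k" by (auto simp: offset_truncation_def)
  then have k: "k > 0" by (auto intro: gr0I)
  have "r div k * k + r mod k = r" "c div k * k + c mod k = c" by (rule div_mult_mod_eq)+
  then show "offset_truncation h k (Suc t) M $$ (r, c) = (offset_truncation h k t M +
    matching_blocks h k (\<lambda>i. (i + t) mod h) (\<lambda>i. sub_block k i ((i + t) mod h) M)) $$ (r, c)"
    using rc k assms(1) cyclic_offset_iff[OF less_mult_imp_div_less[OF rc(1)]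
        less_mult_imp_div_less[OF rc(2)] assms(1)]
    by (auto simp: offset_truncation_def matching_blocks_def sub_block_def)
qed (simp_all add: offset_truncation_def)

lemma offset_truncation_zero: "offset_truncation h k 0 M = 0\<^sub>m (h * k) (h * k)"
  by (rule eq_matI) (auto simp: offset_truncation_def)

lemma offset_truncation_full:
  assumes "M \<in> carrier_mat (h * k) (h * k)"
  shows "offset_truncation h k h M = M"
proof (rule eq_matI)
  fix r c assume "r < dim_row M" "c < dim_col M"
  moreover have "h > 0" using assms calculation by (auto intro: gr0I)
  ultimately show "offset_truncation h k h M $$ (r, c) = M $$ (r, c)"
    using assms by (simp add: offset_truncation_def)
qed (use assms in \<open>simp_all add: offset_truncation_def\<close>)

lemma block_transvection_offset_truncation_Suc:
  fixes M :: "'a::semiring_1 mat"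
  assumes t: "t < h" and M: "M \<in> carrier_mat (h * k) (h * k)"
    and PQ: "\<And>i. i < h \<Longrightarrow> P i \<in> carrier_mat k k \<and> Q i \<in> carrier_mat k k \<and>
      sub_block k i ((i + t) mod h) M = P i + Q i"
  shows "block_transvection (h * k) (offset_truncation h k (Suc t) M) =
    block_transvection (h * k) (offset_truncation h k t M) *
    block_transvection (h * k) (matching_blocks h k (\<lambda>i. (i + t) mod h) P) *
    block_transvection (h * k) (matching_blocks h k (\<lambda>i. (i + t) mod h) Q)"
proof -
  have "matching_blocks h k (\<lambda>i. (i + t) mod h) (\<lambda>i. sub_block k i ((i + t) mod h) M) =
      matching_blocks h k (\<lambda>i. (i + t) mod h) (\<lambda>i. P i + Q i)"
    using PQ by (intro matching_blocks_cong) simp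
  also have "\<dots> = matching_blocks h k (\<lambda>i. (i + t) mod h) P + matching_blocks h k (\<lambda>i. (i + t) mod h) Q"
    using PQ by (intro matching_blocks_add) simp_all
  finally have "offset_truncation h k (Suc t) M = offset_truncation h k t M +
      matching_blocks h k (\<lambda>i. (i + t) mod h) P + matching_blocks h k (\<lambda>i. (i + t) mod h) Q"
    using offset_truncation_Suc[OF t M] by (simp add: assoc_add_mat[of _ "h * k" "h * k"])
  then show ?thesis by (simp add: block_transvection_add)
qed

lemma layered_product_block_transvection:
  assumes k: "k > 0" and M: "M \<in> carrier_mat (h * k) (h * k)"
  shows "layered_product (2 * h) k (2 * h) (block_transvection (h * k) M)"
proof -
  have "\<forall>ij. \<exists>PQ. fst PQ \<in> carrier_mat k k \<and> snd PQ \<in> carrier_mat k k \<and> invertible_mat (fst PQ) \<and>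
      (invertible_mat (snd PQ) \<or> snd PQ = 0\<^sub>m k k) \<and> sub_block k (fst ij) (snd ij) M = fst PQ + snd PQ"
    using sum_of_invertibles[of "sub_block k _ _ M" k] by (simp add: sub_block_def)
  from choice[OF this] obtain F
    where F: "\<forall>ij. fst (F ij) \<in> carrier_mat k k \<and> snd (F ij) \<in> carrier_mat k k \<and>
      invertible_mat (fst (F ij)) \<and> (invertible_mat (snd (F ij)) \<or> snd (F ij) = 0\<^sub>m k k) \<and>
      sub_block k (fst ij) (snd ij) M = fst (F ij) + snd (F ij)"
    ..
  define P where "P t i = fst (F (i, (i + t) mod h))" for t i
  define Q where "Q t i = snd (F (i, (i + t) mod h))" for t i
  have "layered_product (2 * h) k (2 * t) (block_transvection (h * k) (offset_truncation h k t M))"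
    if "t \<le> h" for t
    using that
  proof (induction t)
    case 0
    then show ?case
      using layered_product_in_block_factor[OF in_block_factor_one, of "2 * h" k]
      by (simp add: offset_truncation_zero block_transvection_zero mult_2 add_mult_distrib)
  next
    case (Suc t)
    have "block_transvection (h * k) (offset_truncation h k (Suc t) M) =
        block_transvection (h * k) (offset_truncation h k t M) *
        block_transvection (h * k) (matching_blocks h k (\<lambda>i. (i + t) mod h) (P t)) *
        block_transvection (h * k) (matching_blocks h k (\<lambda>i. (i + t) mod h) (Q t))"
      using Suc.prems F
      by (intro block_transvection_offset_truncation_Suc[OF _ M]) (auto simp: P_def Q_def)
    moreover have "layered_product (2 * h) k (2 * t + 1 + 1) \<dots>"
      using Suc F k by (intro layered_product_mult layered_product_matching_transvection
          inj_on_cyclic_shift)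
        (auto simp: P_def Q_def)
    ultimately show ?case by simp
  qed
  then show ?thesis using offset_truncation_full[OF M] by (metis order_refl)
qed

section \<open>Block triangular matrices\<close>

lemma block_lower_triangular_split:
  assumes k: "k > 0" and X: "X \<in> carrier_mat (h * k + h * k) (h * k + h * k)"
    and low: "block_lower_triangular (2 * h) k X"
  obtains A C D where "A \<in> carrier_mat (h * k) (h * k)" "C \<in> carrier_mat (h * k) (h * k)"
    "D \<in> carrier_mat (h * k) (h * k)" "block_lower_triangular h k A" "block_lower_triangular h k D"
    "X = four_block_mat A (0\<^sub>m (h * k) (h * k)) C D"
proof -
  obtain A B C D where split: "split_block X (h * k) (h * k) = (A, B, C, D)" by (metis prod_cases4)
  have blocks: "A \<in> carrier_mat (h * k) (h * k)" "B \<in> carrier_mat (h * k) (h * k)"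
    "C \<in> carrier_mat (h * k) (h * k)" "D \<in> carrier_mat (h * k) (h * k)" "X = four_block_mat A B C D"
    using split_block[OF split, of "h * k" "h * k"] X by auto
  have zero: "X $$ (r, c) = 0" if "r < h * k + h * k" "c < h * k + h * k" "r div k < c div k" for r c
    using low that by (auto simp: block_lower_triangular_def algebra_simps)
  have "B = 0\<^sub>m (h * k) (h * k)"
  proof (rule eq_matI)
    fix r c
    assume "r < dim_row (0\<^sub>m (h * k) (h * k) :: bit mat)" "c < dim_col (0\<^sub>m (h * k) (h * k) :: bit mat)"
    then have "r div k < h" "h \<le> (c + h * k) div k" by (auto simp: less_block_iff[OF k, symmetric] k)
    then show "B $$ (r, c) = 0\<^sub>m (h * k) (h * k) $$ (r, c)"
      using split X zero[of r "c + h * k"] \<open>r < dim_row _\<close> \<open>c < dim_col _\<close>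
      by (auto simp: split_block_def Let_def)
  qed (use blocks in auto)
  moreover have "block_lower_triangular h k A"
    using split X zero by (auto simp: split_block_def Let_def block_lower_triangular_def)
  moreover have "block_lower_triangular h k D"
    unfolding block_lower_triangular_def
  proof (intro allI impI)
    fix r c assume rc: "r < h * k" "c < h * k" "r div k < c div k"
    then have "(r + h * k) div k < (c + h * k) div k" using k by simp
    then show "D $$ (r, c) = 0"
      using split X zero[of "r + h * k" "c + h * k"] rc by (auto simp: split_block_def Let_def)
  qed
  ultimately show thesis using blocks by (intro that) auto
qed

lemma block_lower_triangular_factorization:
  fixes A :: "'a::semiring_1 mat"
  assumes A: "A \<in> carrier_mat n n" and C: "C \<in> carrier_mat n n" and D: "D \<in> carrier_mat n n"
    and D': "D' \<in> carrier_mat n n" "D * D' = 1\<^sub>m n"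
  shows "four_block_mat A (0\<^sub>m n n) C D = block_diag2 n A D * block_transvection n (D' * C)"
proof -
  have "D * (D' * C) = C" using C D D' by (simp add: assoc_mult_mat[OF D D'(1) C, symmetric])
  then show ?thesis
    unfolding block_diag2_def block_transvection_def
    using A C D D'(1) mult_four_block_mat[OF A zero_carrier_mat zero_carrier_mat D
        one_carrier_mat zero_carrier_mat mult_carrier_mat[OF D'(1) C] one_carrier_mat]
    by simp
qed

lemma layered_product_block_lower_triangular:
  assumes k: "k > 0"
  shows "X \<in> carrier_mat (2 ^ a * k) (2 ^ a * k) \<Longrightarrow> det X \<noteq> 0 \<Longrightarrow>
    block_lower_triangular (2 ^ a) k X \<Longrightarrow> layered_product (2 ^ a) k (2 * (2 ^ a - 1)) X"
proof (induction a arbitrary: X)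
  case 0
  have "diag_block k 0 X = X" using 0 by (intro eq_matI) (auto simp: diag_block_def)
  then have "in_block_factor 1 k X"
    using 0 by (auto simp: in_block_factor_def invertible_mat_iff_det[of _ k])
  then show ?case using layered_product_in_block_factor by simp
next
  case (Suc a)
  define h :: nat where "h = 2 ^ a"
  have N: "2 ^ Suc a = 2 * h" "2 * h * k = h * k + h * k" by (simp_all add: h_def)
  have X: "X \<in> carrier_mat (h * k + h * k) (h * k + h * k)" "block_lower_triangular (2 * h) k X"
    using Suc.prems unfolding N by simp_all
  obtain A C D where ACD: "A \<in> carrier_mat (h * k) (h * k)" "C \<in> carrier_mat (h * k) (h * k)"
    "D \<in> carrier_mat (h * k) (h * k)" "block_lower_triangular h k A" "block_lower_triangular h k D"
    "X = four_block_mat A (0\<^sub>m (h * k) (h * k)) C D"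
    using block_lower_triangular_split[OF k X] .
  have "det X = det A * det D"
    unfolding ACD(6) by (rule det_four_block_mat_upper_right_zero[OF ACD(1) refl ACD(2,3)])
  then have dA: "det A \<noteq> 0" and dD: "det D \<noteq> 0" using Suc.prems(2) by auto
  obtain D' where D': "D' \<in> carrier_mat (h * k) (h * k)" "D * D' = 1\<^sub>m (h * k)"
    using invertible_mat_inverse[of D "h * k"] ACD(3) dD by (auto simp: invertible_mat_iff_det)
  have "X = block_diag2 (h * k) A D * block_transvection (h * k) (D' * C)"
    unfolding ACD(6) using block_lower_triangular_factorization[OF ACD(1-3) D'] .
  moreover have "layered_product (2 * h) k (2 * (h - 1) + 2 * h)
      (block_diag2 (h * k) A D * block_transvection (h * k) (D' * C))"
    using Suc.IH ACD dA dD D' k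
    by (intro layered_product_mult layered_product_block_diag2 layered_product_block_transvection)
      (auto simp: h_def)
  moreover have "2 * (h - 1) + 2 * h = 2 * (2 * h - 1)" using h_def by simp
  ultimately show ?case unfolding N by simp
qed

lemma block_upper_triangular_if_upper_triangular:
  assumes "U \<in> carrier_mat (N * k) (N * k)" "upper_triangular U"
  shows "block_upper_triangular N k U"
  unfolding block_upper_triangular_def
proof (intro allI impI)
  fix r c assume rc: "r < N * k" "c < N * k" "c div k < r div k"
  then have "c < r" using div_le_mono[of r c k] by linarith
  then show "U $$ (r, c) = 0" using assms rc by (auto intro: upper_triangularD)
qed

lemma block_lower_triangular_if_upper_triangular_transpose:
  assumes "L \<in> carrier_mat (N * k) (N * k)" "upper_triangular L\<^sup>T"
  shows "block_lower_triangular N k L"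
  unfolding block_lower_triangular_def
proof (intro allI impI)
  fix r c assume rc: "r < N * k" "c < N * k" "r div k < c div k"
  then have "r < c" using div_le_mono[of c r k] by linarith
  then have "L\<^sup>T $$ (c, r) = 0" using assms rc by (intro upper_triangularD) auto
  then show "L $$ (r, c) = 0" using assms rc by simp
qed

lemma layered_product_block_triangular:
  assumes k: "k > 0" and X: "X \<in> carrier_mat (2 ^ a * k) (2 ^ a * k)" "det X \<noteq> 0"
    and triangular: "block_upper_triangular (2 ^ a) k X \<or> block_lower_triangular (2 ^ a) k X"
  shows "layered_product (2 ^ a) k (2 * (2 ^ a - 1)) X"
proof (cases "block_lower_triangular (2 ^ a) k X")
  case True
  then show ?thesis using layered_product_block_lower_triangular[OF k X] by simp
next
  case False
  then have "block_lower_triangular (2 ^ a) k X\<^sup>T"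
    using triangular X(1) by (auto simp: block_lower_triangular_def block_upper_triangular_def)
  moreover have "X\<^sup>T \<in> carrier_mat (2 ^ a * k) (2 ^ a * k)" "det X\<^sup>T \<noteq> 0"
    using X by (simp_all add: det_transpose)
  ultimately have "layered_product (2 ^ a) k (2 * (2 ^ a - 1)) X\<^sup>T\<^sup>T"
    by (intro layered_product_transpose layered_product_block_lower_triangular[OF k])
  then show ?thesis by simp
qed

lemma layered_product_perm_decomposition:
  assumes k: "k > 0" and X: "X \<in> carrier_mat (2 ^ a * k) (2 ^ a * k)" "det X \<noteq> 0"
  shows "\<exists>\<sigma> M. \<sigma> permutes {..<2 ^ a * k} \<and> layered_product (2 ^ a) k (4 * (2 ^ a - 1)) M \<and>
    X = perm_mat (2 ^ a * k) \<sigma> * M"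
proof -
  obtain \<sigma> U L where \<sigma>UL: "\<sigma> permutes {..<2 ^ a * k}" "U \<in> carrier_mat (2 ^ a * k) (2 ^ a * k)"
    "L \<in> carrier_mat (2 ^ a * k) (2 ^ a * k)" "upper_triangular U" "upper_triangular L\<^sup>T"
    "perm_mat (2 ^ a * k) \<sigma> * X = U * L"
    using perm_upper_lower_decomposition[OF X] by blast
  have "det U * det L \<noteq> 0"
    using \<sigma>UL X det_perm_mat_nonzero[OF \<sigma>UL(1)] by (metis det_mult mult_eq_0_iff perm_mat_carrier)
  then have "layered_product (2 ^ a) k (2 * (2 ^ a - 1) + 2 * (2 ^ a - 1)) (U * L)"
    using \<sigma>UL by (intro layered_product_mult layered_product_block_triangular[OF k])
      (auto intro: block_upper_triangular_if_upper_triangular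
          block_lower_triangular_if_upper_triangular_transpose)
  moreover have "X = perm_mat (2 ^ a * k) (Hilbert_Choice.inv \<sigma>) * (U * L)"
    using perm_mat_inv_mult[OF \<sigma>UL(1) X(1)] \<sigma>UL(6) by simp
  ultimately show ?thesis using permutes_inv[OF \<sigma>UL(1)] by fastforce
qed

theorem theorem1:
  fixes k a N :: nat
  assumes "k \<ge> 1" and "a \<ge> 1" and "N = 2 ^ a"
  shows "(\<forall>X \<in> GL2 (N * k). \<exists>P M. perm_matrix (N * k) P \<and>
              layered_product N k (4 * (N - 1)) M \<and> X = P * M)
       \<and> (\<forall>X \<in> GL2 (N * k).
            block_upper_triangular N k X \<or> block_lower_triangular N k X \<longrightarrow>
            layered_product N k (2 * (N - 1)) X)"
proof (intro conjI ballI impI)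
  have k: "k > 0" using assms(1) by simp
  fix X assume "X \<in> GL2 (N * k)"
  then have X: "X \<in> carrier_mat (2 ^ a * k) (2 ^ a * k)" "det X \<noteq> 0"
    using assms(3) by (auto simp: GL2_def invertible_mat_iff_det)
  then show "block_upper_triangular N k X \<or> block_lower_triangular N k X \<Longrightarrow>
      layered_product N k (2 * (N - 1)) X"
    using layered_product_block_triangular[OF k] assms(3) by blast
  obtain \<sigma> M where "\<sigma> permutes {..<N * k}" "layered_product N k (4 * (N - 1)) M"
    "X = perm_mat (N * k) \<sigma> * M"
    using layered_product_perm_decomposition[OF k X] assms(3) by blast
  moreover have "perm_matrix (N * k) (perm_mat (N * k) \<sigma>)"
    using calculation(1) by (auto simp: perm_matrix_def perm_mat_def)
  ultimately show "\<exists>P M. perm_matrix (N * k) P \<and> layered_product N k (4 * (N - 1)) M \<and> X = P * M"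
    by blast
qed

end
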